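(* There exist constants $C_d$ and $\tilde C_d$ such that for all $L\ge1$ and all Schwartz functions $f\in\mathcal S(\mathbb R^d)$ that are symmetric with respect to each reflection $\rho_j:(x_1,\dots,x_j,\dots,x_d)\mapsto(x_1,\dots,-x_j,\dots,x_d)$ (i.e. $f\circ\rho_j=f$ for $j=1,\dots,d$), we have $$\langle k_1\rangle^2\cdots\langle k_d\rangle^2|\hat f_\#(k)|\le C_d\sum_{\alpha\in\mathbb N_0^d:\ \alpha_j\le2}\sup_{x\in\mathbb R^d}|\langle x\rangle^{2d}\partial^\alpha f(x)|$$ for all $k=(k_1,\dots,k_d)\in\Lambda_L^*$. Furthermore $\hat f_\#\in\ell^1(\Lambda_L^* )$ and $$\|\hat f_\#\|_{*,1}\le\tilde C_d\sum_{\alpha\in\mathbb N_0^d:\ \alpha_j\le2}\sup_{x\in\mathbb R^d}|\langle x\rangle^{2d}\partial^\alpha f(x)|.$$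
   Context: $\Lambda_L=[-L/2,L/2)^d$, $\Lambda_L^*=(\frac1L\mathbb Z)^d$; $\hat f_\#(k)=\int_{\Lambda_L}e^{-2\pi ik\cdot x}f(x)dx$; $\|g\|_{*,1}=|\Lambda_L|^{-1}\sum_{k\in\Lambda_L^*}|g(k)|$; $\langle x\rangle=(1+|x|^2)^{1/2}$. *)

theory Defs
  imports "HOL-Analysis.Analysis"
begin

definition partial_deriv :: "'d::finite \<Rightarrow> (real^'d \<Rightarrow> complex) \<Rightarrow> real^'d \<Rightarrow> complex" where
  "partial_deriv j f x = vector_derivative (\<lambda>t. f (x + t *\<^sub>R axis j 1)) (at 0)"

fun partials :: "'d::finite list \<Rightarrow> (real^'d \<Rightarrow> complex) \<Rightarrow> real^'d \<Rightarrow> complex" where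
  "partials [] f = f"
| "partials (j # js) f = partial_deriv j (partials js f)"

(* Multi-index derivative <partial>^<alpha>: differentiate <alpha> j times in direction j
 (in some order; irrelevant for smooth functions). *)
definition dmulti :: "('d::finite \<Rightarrow> nat) \<Rightarrow> (real^'d \<Rightarrow> complex) \<Rightarrow> real^'d \<Rightarrow> complex" where
  "dmulti \<alpha> f = partials (SOME js. \<forall>j. count_list js j = \<alpha> j) f"

definition schwartz :: "(real^'d::finite \<Rightarrow> complex) \<Rightarrow> bool" where
  "schwartz f \<longleftrightarrow>
     (\<forall>js x j. (\<lambda>t. partials js f (x + t *\<^sub>R axis j 1)) differentiable (at 0)) \<and>
     (\<forall>js. continuous_on UNIV (partials js f)) \<and>
     (\<forall>js (N::nat). \<exists>B. \<forall>x. norm x ^ N * cmod (partials js f x) \<le> B)"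

definition reflect :: "'d::finite \<Rightarrow> real^'d \<Rightarrow> real^'d" where
  "reflect j x = (\<chi> i. if i = j then - (x $ i) else x $ i)"

definition torus_box :: "real \<Rightarrow> (real^'d::finite) set" where
  "torus_box L = {x. \<forall>j. - L / 2 \<le> x $ j \<and> x $ j < L / 2}"

definition dual_lattice :: "real \<Rightarrow> (real^'d::finite) set" where
  "dual_lattice L = {k. \<forall>j. \<exists>n::int. k $ j = of_int n / L}"

definition fourier_box :: "real \<Rightarrow> (real^'d::finite \<Rightarrow> complex) \<Rightarrow> real^'d \<Rightarrow> complex" where
  "fourier_box L f k =
     (LINT x : torus_box L | lborel. exp (- (2 * pi * \<i> * complex_of_real (k \<bullet> x))) * f x)"

definition jbr :: "'a::real_normed_vector \<Rightarrow> real" where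
  "jbr x = sqrt (1 + norm x ^ 2)"

definition schwartz_seminorm :: "(real^'d::finite \<Rightarrow> complex) \<Rightarrow> real" where
  "schwartz_seminorm f =
     (\<Sum>\<alpha>\<in>{\<alpha>::'d \<Rightarrow> nat. \<forall>j. \<alpha> j \<le> 2}.
        (SUP x. \<bar>jbr x ^ (2 * CARD('d))\<bar> * cmod (dmulti \<alpha> f x)))"

end

theory Submission
  imports Defs
begin

(* Write e_k(t) = exp(-2 pi i k t). As k L is an integer, e_k takes the same value at -L/2 and L/2,
   so integrating e_k f twice by parts in the coordinate x_j over [-L/2, L/2) gives
     (1 + 4 pi^2 k_j^2) * integral (e_k f) = integral (e_k (f - d_j^2 f)) + 2 e_k(L/2) * d_j f |_{x_j = L/2}:
   the boundary terms containing f cancel since f is even in x_j, those containing the odd function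
   d_j f add up. Iterating over all coordinates bounds prod_j (1 + 4 pi^2 k_j^2) |f_#(k)| by 4^d
   integrals of derivatives d^alpha f with all alpha_j <= 2 over (parts of) the box. Each such
   derivative is at most the seminorm times prod_j <x_j>^-2, whose integral is at most pi^d.
   Summability follows from sum_n <n/L>^-2 <= 2 pi L, comparing each term with the increment of
   L arctan(t/L) over an interval of length 1 around n. *)

section \<open>Symmetry of second partial derivatives\<close>

definition smooth :: "(real^'d::finite \<Rightarrow> complex) \<Rightarrow> bool" where
  "smooth g \<longleftrightarrow> (\<forall>js x j. (\<lambda>t. partials js g (x + t *\<^sub>R axis j 1)) differentiable (at 0)) \<and>
     (\<forall>js. continuous_on UNIV (partials js g))"

lemma has_vector_derivative_at_shift:
  assumes "((\<lambda>u. H (s + u)) has_vector_derivative D) (at 0)"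
  shows "(H has_vector_derivative D) (at s)"
proof -
  have "((\<lambda>u. u - s) has_vector_derivative 1) (at s)"
    by (auto intro!: derivative_eq_intros)
  from vector_diff_chain_at[OF this, of "\<lambda>u. H (s + u)"]
  show ?thesis using assms by (simp add: o_def)
qed

lemma has_vector_derivative_partial_deriv:
  fixes h :: "real^'d::finite \<Rightarrow> complex"
  assumes "\<And>x. (\<lambda>t. h (x + t *\<^sub>R axis j 1)) differentiable (at 0)"
  shows "((\<lambda>t. h (x + t *\<^sub>R axis j 1)) has_vector_derivative partial_deriv j h (x + s *\<^sub>R axis j 1)) (at s)"
proof (rule has_vector_derivative_at_shift)
  have "(\<lambda>u. h (x + (s + u) *\<^sub>R axis j 1)) = (\<lambda>u. h ((x + s *\<^sub>R axis j 1) + u *\<^sub>R axis j 1))"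
    by (simp add: algebra_simps scaleR_add_left)
  then show "((\<lambda>u. h (x + (s + u) *\<^sub>R axis j 1)) has_vector_derivative partial_deriv j h (x + s *\<^sub>R axis j 1)) (at 0)"
    unfolding partial_deriv_def using assms[of "x + s *\<^sub>R axis j 1"]
    by (simp add: vector_derivative_works)
qed

lemma partials_append: "partials (xs @ ys) g = partials xs (partials ys g)"
  by (induction xs) auto

lemma smooth_partials: "smooth g \<Longrightarrow> smooth (partials ls g)"
  unfolding smooth_def partials_append[symmetric] by blast

lemma smooth_continuous_on: "smooth g \<Longrightarrow> continuous_on UNIV (partials ls g)"
  unfolding smooth_def by blast

lemma smooth_has_vector_derivative:
  assumes "smooth g"
  shows "((\<lambda>t. partials ls g (x + t *\<^sub>R axis j 1)) has_vector_derivative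
           partials (j # ls) g (x + s *\<^sub>R axis j 1)) (at s)"
  using has_vector_derivative_partial_deriv[of "partials ls g" j x s] assms
  unfolding smooth_def by simp

lemma smooth_Re_has_real_derivative:
  assumes "smooth g"
  shows "((\<lambda>t. Re (c * partials ls g (x + t *\<^sub>R axis j 1))) has_real_derivative
           Re (c * partials (j # ls) g (x + s *\<^sub>R axis j 1))) (at s)"
proof -
  have "((\<lambda>t. c * partials ls g (x + t *\<^sub>R axis j 1)) has_vector_derivative
          c * partials (j # ls) g (x + s *\<^sub>R axis j 1)) (at s)"
    by (rule has_vector_derivative_mult_right[OF smooth_has_vector_derivative[OF assms]])
  from bounded_linear.has_vector_derivative[OF bounded_linear_Re this]
  show ?thesis by (simp add: has_real_derivative_iff_has_vector_derivative)
qed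

text \<open>The mean value theorem is for real functions; multiplying by \<open>c\<close> before taking the real part
  reaches both the real and the imaginary part.\<close>

lemma second_difference_mvt:
  fixes g :: "real^'d::finite \<Rightarrow> complex"
  assumes sm: "smooth g" and h: "h > 0"
  shows "\<exists>y. norm (y - x) \<le> 2 * h \<and>
     Re (c * (g (x + h *\<^sub>R axis i 1 + h *\<^sub>R axis j 1) - g (x + h *\<^sub>R axis i 1)
              - g (x + h *\<^sub>R axis j 1) + g x))
       = h^2 * Re (c * partials [j, i] g y)"
proof -
  define ei :: "real^'d" where "ei = axis i 1"
  define ej :: "real^'d" where "ej = axis j 1"
  define \<phi> where "\<phi> s = Re (c * partials [] g (x + h *\<^sub>R ej + s *\<^sub>R ei)) - Re (c * partials [] g (x + s *\<^sub>R ei))" for s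
  define \<phi>' where "\<phi>' s = Re (c * partials [i] g (x + h *\<^sub>R ej + s *\<^sub>R ei)) - Re (c * partials [i] g (x + s *\<^sub>R ei))" for s
  have "(\<phi> has_real_derivative \<phi>' s) (at s)" for s
    unfolding \<phi>_def \<phi>'_def ei_def
    by (intro derivative_intros smooth_Re_has_real_derivative[OF sm])
  then obtain \<sigma> where \<sigma>: "0 < \<sigma>" "\<sigma> < h" "\<phi> h - \<phi> 0 = h * \<phi>' \<sigma>"
    using MVT2[of 0 h \<phi> \<phi>'] h by auto
  define \<psi> where "\<psi> t = Re (c * partials [i] g (x + \<sigma> *\<^sub>R ei + t *\<^sub>R ej))" for t
  define \<psi>' where "\<psi>' t = Re (c * partials [j, i] g (x + \<sigma> *\<^sub>R ei + t *\<^sub>R ej))" for t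
  have "(\<psi> has_real_derivative \<psi>' t) (at t)" for t
    unfolding \<psi>_def \<psi>'_def ej_def
    by (intro derivative_intros smooth_Re_has_real_derivative[OF sm])
  then obtain \<tau> where \<tau>: "0 < \<tau>" "\<tau> < h" "\<psi> h - \<psi> 0 = h * \<psi>' \<tau>"
    using MVT2[of 0 h \<psi> \<psi>'] h by auto
  have \<phi>'_eq: "\<phi>' \<sigma> = \<psi> h - \<psi> 0"
    unfolding \<phi>'_def \<psi>_def by (simp add: algebra_simps)
  define y where "y = x + \<sigma> *\<^sub>R ei + \<tau> *\<^sub>R ej"
  have "norm (y - x) \<le> norm (\<sigma> *\<^sub>R ei) + norm (\<tau> *\<^sub>R ej)"
    unfolding y_def by (metis add_diff_cancel_left' add.assoc norm_triangle_ineq)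
  also have "\<dots> = \<sigma> + \<tau>" using \<sigma> \<tau> by (simp add: ei_def ej_def)
  finally have "norm (y - x) \<le> 2 * h" using \<sigma> \<tau> by simp
  moreover have "Re (c * (g (x + h *\<^sub>R axis i 1 + h *\<^sub>R axis j 1) - g (x + h *\<^sub>R axis i 1)
                  - g (x + h *\<^sub>R axis j 1) + g x)) = \<phi> h - \<phi> 0"
    unfolding \<phi>_def ei_def ej_def by (simp add: algebra_simps)
  moreover have "\<phi> h - \<phi> 0 = h^2 * Re (c * partials [j, i] g y)"
    using \<sigma>(3) \<tau>(3) \<phi>'_eq unfolding \<psi>'_def y_def by (simp add: power2_eq_square)
  ultimately show ?thesis by (intro exI[of _ y]) simp
qed

lemma second_partials_Re_nearby_eq:
  fixes g :: "real^'d::finite \<Rightarrow> complex"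
  assumes sm: "smooth g" and h: "h > 0"
  shows "\<exists>y1 y2. norm (y1 - x) \<le> 2 * h \<and> norm (y2 - x) \<le> 2 * h \<and>
           Re (c * partials [j, i] g y1) = Re (c * partials [i, j] g y2)"
proof -
  obtain y1 where y1: "norm (y1 - x) \<le> 2 * h"
    "Re (c * (g (x + h *\<^sub>R axis i 1 + h *\<^sub>R axis j 1) - g (x + h *\<^sub>R axis i 1)
              - g (x + h *\<^sub>R axis j 1) + g x)) = h^2 * Re (c * partials [j, i] g y1)"
    using second_difference_mvt[OF sm h, of x c i j] by blast
  obtain y2 where y2: "norm (y2 - x) \<le> 2 * h"
    "Re (c * (g (x + h *\<^sub>R axis j 1 + h *\<^sub>R axis i 1) - g (x + h *\<^sub>R axis j 1)
              - g (x + h *\<^sub>R axis i 1) + g x)) = h^2 * Re (c * partials [i, j] g y2)"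
    using second_difference_mvt[OF sm h, of x c j i] by blast
  have "h^2 * Re (c * partials [j, i] g y1) = h^2 * Re (c * partials [i, j] g y2)"
    using y1(2) y2(2) by (simp add: algebra_simps)
  with y1(1) y2(1) h show ?thesis by auto
qed

lemma partials_commute_Re:
  fixes g :: "real^'d::finite \<Rightarrow> complex"
  assumes sm: "smooth g"
  shows "Re (c * partials [j, i] g x) = Re (c * partials [i, j] g x)"
proof -
  define F1 where "F1 y = Re (c * partials [j, i] g y)" for y
  define F2 where "F2 y = Re (c * partials [i, j] g y)" for y
  have "\<exists>p. norm (fst p - x) \<le> 2 / Suc n \<and> norm (snd p - x) \<le> 2 / Suc n \<and> F1 (fst p) = F2 (snd p)" for n
  proof -
    have "(0::real) < 1 / Suc n" by simp
    from second_partials_Re_nearby_eq[OF sm this, of x c j i] obtain y1 y2 where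
      "norm (y1 - x) \<le> 2 / Suc n" "norm (y2 - x) \<le> 2 / Suc n" "F1 y1 = F2 y2"
      unfolding F1_def F2_def by auto
    then show ?thesis by (intro exI[of _ "(y1, y2)"]) simp
  qed
  then have "\<forall>n. \<exists>p. norm (fst p - x) \<le> 2 / Suc n \<and> norm (snd p - x) \<le> 2 / Suc n \<and> F1 (fst p) = F2 (snd p)"
    by blast
  from choice[OF this] obtain p where p: "\<forall>n. norm (fst (p n) - x) \<le> 2 / Suc n \<and>
      norm (snd (p n) - x) \<le> 2 / Suc n \<and> F1 (fst (p n)) = F2 (snd (p n))"
    by blast
  have to_x: "z \<longlonglongrightarrow> x" if "\<And>n. norm (z n - x) \<le> 2 / Suc n" for z :: "nat \<Rightarrow> real^'d"
  proof -
    have "(\<lambda>n. z n - x) \<longlonglongrightarrow> 0"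
    proof (rule Lim_null_comparison)
      show "\<forall>\<^sub>F n in sequentially. norm (z n - x) \<le> 2 * inverse (real (Suc n))"
        using that by (intro always_eventually allI) (simp add: divide_inverse)
      show "(\<lambda>n. 2 * inverse (real (Suc n))) \<longlonglongrightarrow> 0"
        using tendsto_mult_right_zero[OF LIMSEQ_inverse_real_of_nat] by simp
    qed
    then show ?thesis by (simp add: LIM_zero_iff)
  qed
  have "continuous_on UNIV (\<lambda>y. Re (c * partials ls g y))" for ls
    by (intro continuous_intros smooth_continuous_on[OF sm])
  then have cont: "isCont (\<lambda>y. Re (c * partials ls g y)) x" for ls
    by (simp add: continuous_on_eq_continuous_at)
  have "(\<lambda>n. F1 (fst (p n))) \<longlonglongrightarrow> F1 x"
    unfolding F1_def by (rule isCont_tendsto_compose[OF cont to_x]) (use p in blast)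
  moreover have "(\<lambda>n. F2 (snd (p n))) \<longlonglongrightarrow> F2 x"
    unfolding F2_def by (rule isCont_tendsto_compose[OF cont to_x]) (use p in blast)
  moreover have "(\<lambda>n. F1 (fst (p n))) = (\<lambda>n. F2 (snd (p n)))"
    using p by blast
  ultimately have "F1 x = F2 x" by (metis LIMSEQ_unique)
  then show ?thesis unfolding F1_def F2_def .
qed

lemma partials_commute:
  assumes "smooth g"
  shows "partials [j, i] g x = partials [i, j] g x"
proof (rule complex_eqI)
  show "Re (partials [j, i] g x) = Re (partials [i, j] g x)"
    using partials_commute_Re[OF assms, of 1] by simp
  show "Im (partials [j, i] g x) = Im (partials [i, j] g x)"
    using partials_commute_Re[OF assms, of "- \<i>"] by simp
qed

lemma partials_Cons_swap:
  assumes "smooth g"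
  shows "partials (a # b # r) g = partials (b # a # r) g"
proof -
  have "partials [a, b] (partials r g) = partials [b, a] (partials r g)"
    using partials_commute[OF smooth_partials[OF assms, of r]] by blast
  then show ?thesis using partials_append[of "[a, b]" r g] partials_append[of "[b, a]" r g] by simp
qed

lemma partials_move_to_front:
  assumes "smooth g"
  shows "partials (p @ a # q) g = partials (a # p @ q) g"
proof (induction p)
  case (Cons b p)
  then have "partials ((b # p) @ a # q) g = partials (b # a # p @ q) g" by simp
  also have "\<dots> = partials (a # b # p @ q) g" by (rule partials_Cons_swap[OF assms])
  finally show ?case by simp
qed simp

lemma partials_cong_count_list:
  assumes "smooth g" "\<And>x. count_list l1 x = count_list l2 x"
  shows "partials l1 g = partials l2 g"
  using assms(2)
proof (induction l1 arbitrary: l2)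
  case Nil
  show ?case
  proof (cases l2)
    case (Cons y ys)
    with Nil[of y] show ?thesis by simp
  qed simp
next
  case (Cons a r)
  have "count_list l2 a \<noteq> 0" using Cons.prems[of a] by simp
  then have "a \<in> set l2" by (simp add: count_list_0_iff)
  then obtain p q where l2: "l2 = p @ a # q" by (meson split_list)
  have "count_list r x = count_list (p @ q) x" for x
    using Cons.prems[of x] unfolding l2 by (simp split: if_splits)
  then have "partials r g = partials (p @ q) g" by (rule Cons.IH)
  then have "partials (a # r) g = partials (a # p @ q) g" by simp
  also have "\<dots> = partials l2 g" unfolding l2 by (rule partials_move_to_front[OF assms(1), symmetric])
  finally show ?case .
qed

lemma dmulti_eq_partials:
  assumes "smooth g" "\<And>j. count_list ls j = \<alpha> j"
  shows "dmulti \<alpha> g = partials ls g"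
proof -
  have "\<forall>j. count_list (SOME js. \<forall>j. count_list js j = \<alpha> j) j = \<alpha> j"
    using someI_ex[of "\<lambda>js. \<forall>j. count_list js j = \<alpha> j"] assms(2) by blast
  then show ?thesis
    unfolding dmulti_def using assms by (intro partials_cong_count_list) auto
qed

section \<open>Integration by parts in one coordinate\<close>

definition fourier_kernel :: "real \<Rightarrow> real \<Rightarrow> complex" where
  "fourier_kernel k t = exp (- (2 * pi * \<i> * complex_of_real (k * t)))"

lemma has_vector_derivative_fourier_kernel:
  "(fourier_kernel k has_vector_derivative (- (2 * pi * \<i> * k)) * fourier_kernel k t) (at t)"
proof -
  have "((\<lambda>z. exp (- (2 * pi * \<i> * of_real k * z))) has_field_derivative
          exp (- (2 * pi * \<i> * of_real k * of_real t)) * (- (2 * pi * \<i> * of_real k))) (at (of_real t))"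
    by (auto intro!: derivative_eq_intros)
  from has_vector_derivative_real_field[OF this]
  show ?thesis unfolding fourier_kernel_def by (simp add: mult.commute mult.left_commute)
qed

lemma continuous_on_fourier_kernel: "continuous_on S (fourier_kernel k)"
  unfolding fourier_kernel_def by (intro continuous_intros)

lemma borel_measurable_fourier_kernel [measurable]: "fourier_kernel k \<in> borel_measurable borel"
  by (intro borel_measurable_continuous_onI continuous_on_fourier_kernel)

lemma norm_fourier_kernel [simp]: "norm (fourier_kernel k t) = 1"
  unfolding fourier_kernel_def by (simp add: norm_exp_eq_Re)

lemma fourier_kernel_mult_uminus: "fourier_kernel k t * fourier_kernel (- k) t = 1"
  unfolding fourier_kernel_def by (simp add: exp_add[symmetric])

lemma fourier_kernel_uminus_eq:
  assumes "k * (2 * a) \<in> \<int>"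
  shows "fourier_kernel k (- a) = fourier_kernel k a"
proof -
  obtain n :: int where n: "k * (2 * a) = of_int n" using assms by (auto elim: Ints_cases)
  have "fourier_kernel k (- a) = fourier_kernel k a * exp ((2 * of_int n * pi) * \<i>)"
    unfolding fourier_kernel_def n[symmetric] by (simp add: exp_add[symmetric] algebra_simps)
  also have "exp ((2 * of_int n * pi) * \<i>) = 1" by (rule exp_integer_2pi) simp
  finally show ?thesis by simp
qed

lemma has_vector_derivative_even_imp_odd:
  fixes \<phi> \<phi>' :: "real \<Rightarrow> 'a::real_normed_vector"
  assumes d: "\<And>t. (\<phi> has_vector_derivative \<phi>' t) (at t)" and ev: "\<And>t. \<phi> (- t) = \<phi> t"
  shows "\<phi>' (- a) = - \<phi>' a"
proof -
  have "((\<lambda>t. - t) has_vector_derivative (- 1)) (at a)" by (auto intro!: derivative_eq_intros)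
  then have "((\<phi> \<circ> uminus) has_vector_derivative (- 1) *\<^sub>R \<phi>' (- a)) (at a)"
    by (rule vector_diff_chain_at) (simp add: d)
  moreover have "\<phi> \<circ> uminus = \<phi>" using ev by (auto simp: o_def)
  ultimately have "(\<phi> has_vector_derivative - \<phi>' (- a)) (at a)" by simp
  then have "- \<phi>' (- a) = \<phi>' a" using d vector_derivative_unique_at by blast
  then show ?thesis by (metis minus_minus)
qed

lemma indicator_mult_mult_eq_scaleR: "(indicator S t * z) * (w :: complex) = indicator S t *\<^sub>R (z * w)"
  by (simp add: indicator_def)

lemma integral_indicator_Ico_eq_Icc:
  fixes h :: "real \<Rightarrow> 'a::{banach, second_countable_topology}"
  assumes [measurable]: "h \<in> borel_measurable borel"
  shows "(\<integral>t. indicator {a..<b} t *\<^sub>R h t \<partial>lborel) = (\<integral>t. indicator {a..b} t *\<^sub>R h t \<partial>lborel)"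
proof (rule integral_cong_AE)
  show "AE t in lborel. indicator {a..<b} t *\<^sub>R h t = indicator {a..b} t *\<^sub>R h t"
    using AE_lborel_singleton[of b] by eventually_elim (auto simp: indicator_def)
qed simp_all

lemma integrable_indicator_Ico_continuous:
  fixes h :: "real \<Rightarrow> 'a::{banach, second_countable_topology}"
  assumes "continuous_on UNIV h"
  shows "integrable lborel (\<lambda>t. indicator {a..<b} t *\<^sub>R h t)"
proof (rule integrable_cong_AE_imp)
  show "integrable lborel (\<lambda>t. indicator {a..b} t *\<^sub>R h t)"
    by (rule borel_integrable_compact[OF compact_Icc continuous_on_subset[OF assms]]) simp
  have [measurable]: "h \<in> borel_measurable borel" by (rule borel_measurable_continuous_onI[OF assms])
  show "(\<lambda>t. indicator {a..<b} t *\<^sub>R h t) \<in> borel_measurable lborel" by simp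
  show "AE t in lborel. indicator {a..b} t *\<^sub>R h t = indicator {a..<b} t *\<^sub>R h t"
    using AE_lborel_singleton[of b] by eventually_elim (auto simp: indicator_def)
qed

lemma integrable_Ico_fourier_kernel:
  assumes "continuous_on UNIV h"
  shows "integrable lborel (\<lambda>t. (indicator {a..<b} t * fourier_kernel k t) * h t)"
  unfolding indicator_mult_mult_eq_scaleR
  by (intro integrable_indicator_Ico_continuous continuous_intros continuous_on_fourier_kernel assms)

lemma fourier_kernel_by_parts_Icc:
  fixes \<phi> \<phi>' \<phi>'' :: "real \<Rightarrow> complex"
  assumes a: "a \<ge> 0" and kL: "k * (2 * a) \<in> \<int>"
    and d1: "\<And>t. (\<phi> has_vector_derivative \<phi>' t) (at t)"
    and d2: "\<And>t. (\<phi>' has_vector_derivative \<phi>'' t) (at t)"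
    and c2: "continuous_on UNIV \<phi>''"
    and ev: "\<And>t. \<phi> (- t) = \<phi> t"
  shows "(\<integral>t. indicator {-a..a} t *\<^sub>R (fourier_kernel k t * (\<phi>'' t + of_real (4 * pi^2 * k^2) * \<phi> t)) \<partial>lborel)
       = 2 * fourier_kernel k a * \<phi>' a"
proof -
  define e where "e = fourier_kernel k"
  define c where "c = - (2 * pi * \<i> * k)"
  define G where "G t = e t * \<phi>' t - c * e t * \<phi> t" for t
  have de: "(e has_vector_derivative c * e t) (at t)" for t
    unfolding e_def c_def by (rule has_vector_derivative_fourier_kernel)
  have "(G has_vector_derivative
          e t * \<phi>'' t + c * e t * \<phi>' t - (c * e t * \<phi>' t + c * (c * e t) * \<phi> t)) (at t)" for t
    unfolding G_def
    by (intro has_vector_derivative_diff has_vector_derivative_mult has_vector_derivative_mult_right de d1 d2)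
  moreover have "e t * \<phi>'' t + c * e t * \<phi>' t - (c * e t * \<phi>' t + c * (c * e t) * \<phi> t)
      = e t * (\<phi>'' t + of_real (4 * pi^2 * k^2) * \<phi> t)" for t
    unfolding c_def by (simp add: power2_eq_square algebra_simps)
  ultimately have dG: "(G has_vector_derivative e t * (\<phi>'' t + of_real (4 * pi^2 * k^2) * \<phi> t)) (at t)" for t
    by simp
  have "continuous_on UNIV \<phi>"
    using d1 by (meson continuous_at_imp_continuous_on has_vector_derivative_continuous)
  then have "continuous_on UNIV (\<lambda>t. e t * (\<phi>'' t + of_real (4 * pi^2 * k^2) * \<phi> t))"
    unfolding e_def by (intro continuous_intros continuous_on_fourier_kernel c2)
  then have "continuous_on {-a..a} (\<lambda>t. e t * (\<phi>'' t + of_real (4 * pi^2 * k^2) * \<phi> t))"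
    by (rule continuous_on_subset) simp
  then have "(\<integral>t. indicator {-a..a} t *\<^sub>R (e t * (\<phi>'' t + of_real (4 * pi^2 * k^2) * \<phi> t)) \<partial>lborel)
      = G a - G (- a)"
    using a dG by (intro integral_FTC_atLeastAtMost) (auto intro: has_vector_derivative_at_within)
  also have "\<dots> = 2 * e a * \<phi>' a"
    unfolding G_def e_def
    using fourier_kernel_uminus_eq[OF kL] has_vector_derivative_even_imp_odd[OF d1 ev, of a] ev[of a]
    by (simp add: algebra_simps)
  finally show ?thesis unfolding e_def .
qed

lemma fourier_kernel_by_parts:
  fixes \<phi> \<phi>' \<phi>'' :: "real \<Rightarrow> complex"
  assumes a: "a \<ge> 0" and kL: "k * (2 * a) \<in> \<int>"
    and d1: "\<And>t. (\<phi> has_vector_derivative \<phi>' t) (at t)"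
    and d2: "\<And>t. (\<phi>' has_vector_derivative \<phi>'' t) (at t)"
    and c2: "continuous_on UNIV \<phi>''"
    and ev: "\<And>t. \<phi> (- t) = \<phi> t"
  shows "of_real (1 + 4 * pi^2 * k^2) * (\<integral>t. (indicator {-a..<a} t * fourier_kernel k t) * \<phi> t \<partial>lborel)
       = (\<integral>t. (indicator {-a..<a} t * fourier_kernel k t) * (\<phi> t - \<phi>'' t) \<partial>lborel)
         + 2 * fourier_kernel k a * \<phi>' a"
proof -
  define K where "K = complex_of_real (4 * pi^2 * k^2)"
  define S where "S h = (\<integral>t. (indicator {-a..<a} t * fourier_kernel k t) * h t \<partial>lborel)" for h
  have c0: "continuous_on UNIV \<phi>"
    using d1 by (meson continuous_at_imp_continuous_on has_vector_derivative_continuous)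
  have int: "integrable lborel (\<lambda>t. (indicator {-a..<a} t * fourier_kernel k t) * h t)"
    if "continuous_on UNIV h" for h
    by (rule integrable_Ico_fourier_kernel[OF that])
  have "S \<phi>'' + K * S \<phi> = S (\<lambda>t. \<phi>'' t + K * \<phi> t)"
    unfolding S_def distrib_left mult.left_commute[of _ K]
    by (simp add: Bochner_Integration.integral_add[OF int[OF c2]] int[OF c0])
  also have "\<dots> = (\<integral>t. indicator {-a..a} t *\<^sub>R (fourier_kernel k t * (\<phi>'' t + K * \<phi> t)) \<partial>lborel)"
    unfolding S_def indicator_mult_mult_eq_scaleR
    by (intro integral_indicator_Ico_eq_Icc borel_measurable_continuous_onI continuous_intros
        continuous_on_fourier_kernel c0 c2)
  also have "\<dots> = 2 * fourier_kernel k a * \<phi>' a"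
    unfolding K_def by (rule fourier_kernel_by_parts_Icc[OF a kL d1 d2 c2 ev])
  finally have boundary: "S \<phi>'' + K * S \<phi> = 2 * fourier_kernel k a * \<phi>' a" .
  have diff: "S (\<lambda>t. \<phi> t - \<phi>'' t) = S \<phi> - S \<phi>''"
    unfolding S_def right_diff_distrib by (rule Bochner_Integration.integral_diff[OF int[OF c0] int[OF c2]])
  have "of_real (1 + 4 * pi^2 * k^2) * S \<phi> = (S \<phi> - S \<phi>'') + (S \<phi>'' + K * S \<phi>)"
    unfolding K_def by (simp add: algebra_simps)
  also have "\<dots> = S (\<lambda>t. \<phi> t - \<phi>'' t) + 2 * fourier_kernel k a * \<phi>' a"
    by (simp only: boundary diff)
  finally show ?thesis unfolding S_def .
qed

lemma borel_measurable_vec_lambda: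
  fixes F :: "'a \<Rightarrow> 'd::finite \<Rightarrow> real"
  assumes "\<And>i. (\<lambda>z. F z i) \<in> borel_measurable M"
  shows "(\<lambda>z. (\<chi> i. F z i) :: real^'d) \<in> borel_measurable M"
proof -
  have "(\<lambda>z. (\<chi> i. F z i) \<bullet> axis i 1) \<in> borel_measurable M" for i
    using assms[of i] by (simp add: inner_axis)
  then show ?thesis
    by (subst borel_measurable_euclidean_space) (auto simp: Basis_vec_def)
qed

definition vec_upd :: "'d::finite \<Rightarrow> real \<Rightarrow> real^'d \<Rightarrow> real^'d" where
  "vec_upd j t x = (\<chi> i. if i = j then t else x $ i)"

definition vec_merge :: "'d::finite set \<Rightarrow> ('d \<Rightarrow> real) \<Rightarrow> real^'d \<Rightarrow> real^'d" where
  "vec_merge I z y = (\<chi> i. if i \<in> I then z i else y $ i)"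

definition box_kernel :: "real \<Rightarrow> real^'d::finite \<Rightarrow> 'd set \<Rightarrow> ('d \<Rightarrow> real) \<Rightarrow> complex" where
  "box_kernel a k I z = (\<Prod>i\<in>I. indicator {-a..<a} (z i) * fourier_kernel (k $ i) (z i))"

text \<open>The Fourier coefficient of \<open>g\<close> on \<open>[-a, a)\<close> in the coordinates in \<open>I\<close>, the remaining
  coordinates being those of \<open>y\<close>; for \<open>I = UNIV\<close> and \<open>a = L/2\<close> it is \<open>fourier_box L g k\<close>.\<close>

definition partial_fourier ::
    "real \<Rightarrow> real^'d::finite \<Rightarrow> 'd set \<Rightarrow> (real^'d \<Rightarrow> complex) \<Rightarrow> real^'d \<Rightarrow> complex" where
  "partial_fourier a k I g y = (\<integral>z. box_kernel a k I z * g (vec_merge I z y) \<partial>(\<Pi>\<^sub>M i\<in>I. lborel))"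

lemma vec_upd_nth [simp]: "vec_upd j t x $ j = t"
  unfolding vec_upd_def by simp

lemma vec_upd_vec_upd [simp]: "vec_upd j a (vec_upd j t x) = vec_upd j a x"
  unfolding vec_upd_def by (auto simp: vec_eq_iff)

lemma vec_upd_add_axis: "l \<noteq> j \<Longrightarrow> vec_upd j a (x + t *\<^sub>R axis l 1) = vec_upd j a x + t *\<^sub>R axis l 1"
  unfolding vec_upd_def by (auto simp: vec_eq_iff axis_def)

lemma vec_upd_zero_add_axis: "vec_upd j 0 x + t *\<^sub>R axis j 1 = vec_upd j t x"
  unfolding vec_upd_def by (auto simp: vec_eq_iff axis_def)

lemma reflect_vec_upd: "reflect j (vec_upd j t x) = vec_upd j (- t) x"
  unfolding vec_upd_def reflect_def by (auto simp: vec_eq_iff)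

lemma reflect_vec_upd_commute: "i \<noteq> j \<Longrightarrow> vec_upd j a (reflect i x) = reflect i (vec_upd j a x)"
  unfolding vec_upd_def reflect_def by (auto simp: vec_eq_iff)

lemma continuous_on_vec_upd: "continuous_on UNIV (vec_upd j a :: real^'d::finite \<Rightarrow> real^'d)"
  unfolding vec_upd_def
proof (intro continuous_on_vec_lambda)
  show "continuous_on UNIV (\<lambda>x::real^'d. if i = j then a else x $ i)" for i
    by (cases "i = j") (auto intro!: continuous_intros)
qed

lemma continuous_on_vec_upd_coordinate: "continuous_on UNIV (\<lambda>t. vec_upd j t x :: real^'d::finite)"
  unfolding vec_upd_def
proof (intro continuous_on_vec_lambda)
  show "continuous_on UNIV (\<lambda>t. if i = j then t else x $ i)" for i
    by (cases "i = j") (auto intro!: continuous_intros)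
qed

lemma vec_merge_insert_upd:
  "j \<notin> I \<Longrightarrow> vec_merge (insert j I) (z(j := t)) y = vec_upd j t (vec_merge I z y)"
  unfolding vec_merge_def vec_upd_def by (auto simp: vec_eq_iff)

lemma measurable_vec_merge: "(\<lambda>z. vec_merge I z y) \<in> borel_measurable (\<Pi>\<^sub>M i\<in>I. lborel)"
  unfolding vec_merge_def
proof (intro borel_measurable_vec_lambda)
  show "(\<lambda>z. if i \<in> I then z i else y $ i) \<in> borel_measurable (\<Pi>\<^sub>M i\<in>I. lborel)" for i
    by (cases "i \<in> I") (simp_all add: measurable_component_singleton)
qed

lemma norm_box_kernel: "norm (box_kernel a k I z) = (\<Prod>i\<in>I. indicator {-a..<a} (z i))"
  unfolding box_kernel_def prod_norm[symmetric] norm_mult by (intro prod.cong) (auto simp: indicator_def)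

lemma borel_measurable_box_kernel:
  "finite I \<Longrightarrow> box_kernel a k I \<in> borel_measurable (\<Pi>\<^sub>M i\<in>I. lborel)"
  unfolding box_kernel_def by measurable

lemma box_kernel_insert_upd:
  assumes "finite I" "j \<notin> I"
  shows "box_kernel a k (insert j I) (z(j := t))
       = (indicator {-a..<a} t * fourier_kernel (k $ j) t) * box_kernel a k I z"
proof -
  have "(\<Prod>i\<in>I. indicator {-a..<a} ((z(j := t)) i) * fourier_kernel (k $ i) ((z(j := t)) i))
      = (\<Prod>i\<in>I. indicator {-a..<a} (z i) * fourier_kernel (k $ i) (z i) :: complex)"
    using assms(2) by (intro prod.cong) auto
  then show ?thesis unfolding box_kernel_def using assms by simp
qed

lemma integrable_indicator_Ico [simp]: "integrable lborel (indicator {a..<b::real} :: real \<Rightarrow> real)"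
proof (rule integrable_real_indicator)
  show "emeasure lborel {a..<b} < \<infinity>"
    by (cases "a \<le> b") (simp_all add: emeasure_lborel_Ico)
qed simp

lemma integrable_partial_fourier:
  fixes g :: "real^'d::finite \<Rightarrow> complex"
  assumes I: "finite I" and c: "continuous_on UNIV g" and b: "\<And>x. norm (g x) \<le> B"
  shows "integrable (\<Pi>\<^sub>M i\<in>I. lborel) (\<lambda>z. box_kernel a k I z * g (vec_merge I z y))"
proof (rule Bochner_Integration.integrable_bound)
  interpret finite_product_sigma_finite "\<lambda>_. lborel" I by standard (simp add: I)
  show "integrable (\<Pi>\<^sub>M i\<in>I. lborel) (\<lambda>z. B * (\<Prod>i\<in>I. indicator {-a..<a} (z i) :: real))"
    by (intro integrable_mult_right product_integrable_prod I) auto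
  have "g \<in> borel_measurable borel" by (rule borel_measurable_continuous_onI[OF c])
  from measurable_comp[OF measurable_vec_merge this]
  show "(\<lambda>z. box_kernel a k I z * g (vec_merge I z y)) \<in> borel_measurable (\<Pi>\<^sub>M i\<in>I. lborel)"
    using borel_measurable_box_kernel[OF I] by (auto simp: o_def)
  have B: "B \<ge> 0" using b[of 0] norm_ge_zero order_trans by blast
  show "AE z in \<Pi>\<^sub>M i\<in>I. lborel. norm (box_kernel a k I z * g (vec_merge I z y))
      \<le> norm (B * (\<Prod>i\<in>I. indicator {-a..<a} (z i) :: real))"
  proof (rule AE_I2)
    fix z
    have p0: "0 \<le> (\<Prod>i\<in>I. indicator {-a..<a} (z i) :: real)" by (intro prod_nonneg) auto
    have "norm (box_kernel a k I z * g (vec_merge I z y))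
        = (\<Prod>i\<in>I. indicator {-a..<a} (z i)) * norm (g (vec_merge I z y))"
      by (simp add: norm_mult norm_box_kernel)
    also have "\<dots> \<le> (\<Prod>i\<in>I. indicator {-a..<a} (z i)) * B" by (intro mult_left_mono b p0)
    finally show "norm (box_kernel a k I z * g (vec_merge I z y))
        \<le> norm (B * (\<Prod>i\<in>I. indicator {-a..<a} (z i) :: real))"
      using B p0 by (simp add: abs_mult mult.commute)
  qed
qed

definition fiber_fourier :: "real \<Rightarrow> real \<Rightarrow> 'd::finite \<Rightarrow> (real^'d \<Rightarrow> complex) \<Rightarrow> real^'d \<Rightarrow> complex" where
  "fiber_fourier a \<kappa> j h w = (\<integral>t. (indicator {-a..<a} t * fourier_kernel \<kappa> t) * h (vec_upd j t w) \<partial>lborel)"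

lemma partial_fourier_insert:
  fixes g :: "real^'d::finite \<Rightarrow> complex"
  assumes I: "finite I" "j \<notin> I" and c: "continuous_on UNIV g" and b: "\<And>x. norm (g x) \<le> B"
  shows "partial_fourier a k (insert j I) g y
       = (\<integral>z. box_kernel a k I z * fiber_fourier a (k $ j) j g (vec_merge I z y) \<partial>(\<Pi>\<^sub>M i\<in>I. lborel))"
proof -
  interpret product_sigma_finite "\<lambda>_::'d. lborel :: real measure" by standard
  have "partial_fourier a k (insert j I) g y
      = (\<integral>z. (\<integral>t. box_kernel a k (insert j I) (z(j := t)) * g (vec_merge (insert j I) (z(j := t)) y) \<partial>lborel)
           \<partial>(\<Pi>\<^sub>M i\<in>I. lborel))"
    unfolding partial_fourier_def
    by (rule product_integral_insert[OF I integrable_partial_fourier[OF _ c b]]) (simp add: I)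
  also have "\<dots> = (\<integral>z. box_kernel a k I z * fiber_fourier a (k $ j) j g (vec_merge I z y) \<partial>(\<Pi>\<^sub>M i\<in>I. lborel))"
  proof (rule Bochner_Integration.integral_cong[OF refl])
    fix z
    have "(\<integral>t. box_kernel a k (insert j I) (z(j := t)) * g (vec_merge (insert j I) (z(j := t)) y) \<partial>lborel)
        = (\<integral>t. box_kernel a k I z * ((indicator {-a..<a} t * fourier_kernel (k $ j) t) * g (vec_upd j t (vec_merge I z y))) \<partial>lborel)"
      unfolding box_kernel_insert_upd[OF I] vec_merge_insert_upd[OF I(2)] by (simp add: mult_ac)
    then show "(\<integral>t. box_kernel a k (insert j I) (z(j := t)) * g (vec_merge (insert j I) (z(j := t)) y) \<partial>lborel)
        = box_kernel a k I z * fiber_fourier a (k $ j) j g (vec_merge I z y)"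
      unfolding fiber_fourier_def by (simp only: integral_mult_right_zero)
  qed
  finally show ?thesis .
qed

lemma fiber_fourier_by_parts:
  fixes g :: "real^'d::finite \<Rightarrow> complex"
  assumes a: "a \<ge> 0" and kL: "\<kappa> * (2 * a) \<in> \<int>"
    and d0: "\<And>x. (\<lambda>s. g (x + s *\<^sub>R axis j 1)) differentiable (at 0)"
    and d1: "\<And>x. (\<lambda>s. partials [j] g (x + s *\<^sub>R axis j 1)) differentiable (at 0)"
    and c2: "continuous_on UNIV (partials [j, j] g)"
    and ev: "\<And>x. g (reflect j x) = g x"
  shows "of_real (1 + 4 * pi^2 * \<kappa>^2) * fiber_fourier a \<kappa> j g w
       = fiber_fourier a \<kappa> j (\<lambda>x. g x - partials [j, j] g x) w
         + 2 * fourier_kernel \<kappa> a * partials [j] g (vec_upd j a w)"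
proof -
  have D1: "((\<lambda>s. g (vec_upd j s w)) has_vector_derivative partials [j] g (vec_upd j t w)) (at t)" for t
    using has_vector_derivative_partial_deriv[of g j "vec_upd j 0 w" t, OF d0]
    unfolding vec_upd_zero_add_axis by simp
  have D2: "((\<lambda>s. partials [j] g (vec_upd j s w)) has_vector_derivative partials [j, j] g (vec_upd j t w)) (at t)" for t
    using has_vector_derivative_partial_deriv[of "partials [j] g" j "vec_upd j 0 w" t, OF d1]
    unfolding vec_upd_zero_add_axis by simp
  have C2: "continuous_on UNIV (\<lambda>s. partials [j, j] g (vec_upd j s w))"
    by (rule continuous_on_compose2[OF c2 continuous_on_vec_upd_coordinate]) auto
  have EV: "g (vec_upd j (- s) w) = g (vec_upd j s w)" for s
    using ev[of "vec_upd j s w"] by (simp add: reflect_vec_upd)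
  show ?thesis
    using fourier_kernel_by_parts[where \<phi> = "\<lambda>s. g (vec_upd j s w)"
        and \<phi>' = "\<lambda>s. partials [j] g (vec_upd j s w)" and \<phi>'' = "\<lambda>s. partials [j, j] g (vec_upd j s w)",
        OF a kL D1 D2 C2 EV]
    unfolding fiber_fourier_def by simp
qed

lemma integral_indicator_Ico_complex:
  assumes "a \<le> b"
  shows "(\<integral>t. (indicator {a..<b} t :: complex) \<partial>lborel) = of_real (b - a)"
proof -
  have "(\<integral>t. (indicator {a..<b} t :: complex) \<partial>lborel) = (\<integral>t. of_real (indicator {a..<b} t) \<partial>lborel)"
    by (simp add: of_real_indicator)
  also have "\<dots> = of_real (measure lborel {a..<b})" by simp
  finally show ?thesis using assms by (simp add: measure_def emeasure_lborel_Ico)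
qed

lemma fiber_fourier_conj_kernel:
  assumes "a \<ge> 0"
  shows "fiber_fourier a \<kappa> j (\<lambda>x. fourier_kernel (- \<kappa>) (x $ j) * h (vec_upd j b x)) w
       = of_real (2 * a) * h (vec_upd j b w)"
proof -
  have "fiber_fourier a \<kappa> j (\<lambda>x. fourier_kernel (- \<kappa>) (x $ j) * h (vec_upd j b x)) w
      = (\<integral>t. h (vec_upd j b w) * (indicator {-a..<a} t :: complex) \<partial>lborel)"
    unfolding fiber_fourier_def
  proof (intro Bochner_Integration.integral_cong refl)
    fix t
    show "(indicator {-a..<a} t * fourier_kernel \<kappa> t) * (fourier_kernel (- \<kappa>) (vec_upd j t w $ j) * h (vec_upd j b (vec_upd j t w)))
        = h (vec_upd j b w) * indicator {-a..<a} t"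
      using fourier_kernel_mult_uminus[of \<kappa> t] by (simp add: mult_ac)
  qed
  also have "\<dots> = of_real (2 * a) * h (vec_upd j b w)"
    using assms by (simp add: integral_indicator_Ico_complex)
  finally show ?thesis .
qed

lemma partial_fourier_insert_cong:
  fixes g h :: "real^'d::finite \<Rightarrow> complex"
  assumes I: "finite I" "j \<notin> I"
    and cg: "continuous_on UNIV g" and bg: "\<And>x. norm (g x) \<le> B"
    and ch: "continuous_on UNIV h" and bh: "\<And>x. norm (h x) \<le> B'"
    and eq: "\<And>w. c * fiber_fourier a (k $ j) j g w = fiber_fourier a (k $ j) j h w"
  shows "c * partial_fourier a k (insert j I) g y = partial_fourier a k (insert j I) h y"
proof -
  have "c * partial_fourier a k (insert j I) g y
      = (\<integral>z. c * (box_kernel a k I z * fiber_fourier a (k $ j) j g (vec_merge I z y)) \<partial>(\<Pi>\<^sub>M i\<in>I. lborel))"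
    unfolding partial_fourier_insert[OF I cg bg] by (rule integral_mult_right_zero[symmetric])
  also have "\<dots> = partial_fourier a k (insert j I) h y"
    unfolding partial_fourier_insert[OF I ch bh] eq[symmetric]
    by (intro Bochner_Integration.integral_cong refl) (simp only: mult.left_commute)
  finally show ?thesis .
qed

lemma partial_fourier_add:
  fixes g h :: "real^'d::finite \<Rightarrow> complex"
  assumes I: "finite I"
    and cg: "continuous_on UNIV g" and bg: "\<And>x. norm (g x) \<le> B"
    and ch: "continuous_on UNIV h" and bh: "\<And>x. norm (h x) \<le> B'"
  shows "partial_fourier a k I (\<lambda>x. g x + h x) y = partial_fourier a k I g y + partial_fourier a k I h y"
  unfolding partial_fourier_def distrib_left
  by (rule Bochner_Integration.integral_add[OF integrable_partial_fourier[OF I cg bg]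
        integrable_partial_fourier[OF I ch bh]])

lemma partial_fourier_mult_left:
  "partial_fourier a k I (\<lambda>x. c * g x) y = c * partial_fourier a k I g y"
proof -
  have "(\<lambda>z. box_kernel a k I z * (c * g (vec_merge I z y))) = (\<lambda>z. c * (box_kernel a k I z * g (vec_merge I z y)))"
    by (rule ext) (rule mult.left_commute)
  then show ?thesis unfolding partial_fourier_def by (simp only: integral_mult_right_zero)
qed

lemma partial_fourier_insert_conj_kernel:
  fixes h :: "real^'d::finite \<Rightarrow> complex"
  assumes I: "finite I" "j \<notin> I" and a: "a \<ge> 0"
    and c: "continuous_on UNIV h" and b: "\<And>x. norm (h x) \<le> B"
  shows "partial_fourier a k (insert j I) (\<lambda>x. fourier_kernel (- (k $ j)) (x $ j) * h (vec_upd j a x)) y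
       = of_real (2 * a) * partial_fourier a k I (\<lambda>x. h (vec_upd j a x)) y"
proof -
  have c': "continuous_on UNIV (\<lambda>x. fourier_kernel (- (k $ j)) (x $ j) * h (vec_upd j a x))"
    by (intro continuous_intros continuous_on_compose2[OF continuous_on_fourier_kernel]
        continuous_on_compose2[OF c continuous_on_vec_upd]) auto
  have b': "norm (fourier_kernel (- (k $ j)) (x $ j) * h (vec_upd j a x)) \<le> B" for x
    using b by (simp add: norm_mult)
  have "partial_fourier a k (insert j I) (\<lambda>x. fourier_kernel (- (k $ j)) (x $ j) * h (vec_upd j a x)) y
      = (\<integral>z. box_kernel a k I z * (of_real (2 * a) * h (vec_upd j a (vec_merge I z y))) \<partial>(\<Pi>\<^sub>M i\<in>I. lborel))"
    unfolding partial_fourier_insert[OF I c' b'] fiber_fourier_conj_kernel[OF a] ..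
  also have "\<dots> = partial_fourier a k I (\<lambda>x. of_real (2 * a) * h (vec_upd j a x)) y"
    unfolding partial_fourier_def ..
  finally show ?thesis by (simp only: partial_fourier_mult_left)
qed

lemma fiber_fourier_add:
  fixes g h :: "real^'d::finite \<Rightarrow> complex"
  assumes "continuous_on UNIV g" "continuous_on UNIV h"
  shows "fiber_fourier a \<kappa> j (\<lambda>x. g x + h x) w = fiber_fourier a \<kappa> j g w + fiber_fourier a \<kappa> j h w"
proof -
  have line: "continuous_on UNIV (\<lambda>t. f (vec_upd j t w))" if "continuous_on UNIV f" for f :: "real^'d \<Rightarrow> complex"
    by (rule continuous_on_compose2[OF that continuous_on_vec_upd_coordinate]) auto
  show ?thesis
    unfolding fiber_fourier_def distrib_left
    by (intro Bochner_Integration.integral_add integrable_Ico_fourier_kernel line assms)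
qed

text \<open>The boundary term lives on the face \<open>x\<^sub>j = a\<close>. It is written as the integral over
  \<open>insert j I\<close> of a function \<open>G\<close> whose fibre integrals in the coordinate \<open>j\<close> reproduce it, so that
  all terms are integrals over the same product measure.\<close>

lemma partial_fourier_by_parts:
  fixes g :: "real^'d::finite \<Rightarrow> complex"
  assumes I: "finite I" "j \<notin> I" and a: "a > 0" and kL: "k $ j * (2 * a) \<in> \<int>"
    and d0: "\<And>x. (\<lambda>s. g (x + s *\<^sub>R axis j 1)) differentiable (at 0)"
    and d1: "\<And>x. (\<lambda>s. partials [j] g (x + s *\<^sub>R axis j 1)) differentiable (at 0)"
    and c0: "continuous_on UNIV g" and c1: "continuous_on UNIV (partials [j] g)"
    and c2: "continuous_on UNIV (partials [j, j] g)"
    and b0: "\<And>x. norm (g x) \<le> B" and b1: "\<And>x. norm (partials [j] g x) \<le> B"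
    and b2: "\<And>x. norm (partials [j, j] g x) \<le> B"
    and ev: "\<And>x. g (reflect j x) = g x"
  shows "of_real (1 + 4 * pi^2 * (k $ j)^2) * partial_fourier a k (insert j I) g y
       = partial_fourier a k (insert j I) (\<lambda>x. g x - partials [j, j] g x) y
         + 2 * fourier_kernel (k $ j) a * partial_fourier a k I (\<lambda>x. partials [j] g (vec_upd j a x)) y"
proof -
  define c where "c = 2 * fourier_kernel (k $ j) a / of_real (2 * a)"
  define g1 where "g1 = (\<lambda>x. g x - partials [j, j] g x)"
  define G where "G x = fourier_kernel (- (k $ j)) (x $ j) * (c * partials [j] g (vec_upd j a x))" for x
  have cg1: "continuous_on UNIV g1" unfolding g1_def by (intro continuous_intros c0 c2)
  have bg1: "norm (g1 x) \<le> 2 * B" for x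
    unfolding g1_def using norm_triangle_ineq4[of "g x" "partials [j, j] g x"] b0[of x] b2[of x] by simp
  have cG: "continuous_on UNIV G"
    unfolding G_def
    by (intro continuous_intros continuous_on_compose2[OF continuous_on_fourier_kernel]
        continuous_on_compose2[OF c1 continuous_on_vec_upd]) auto
  have bG: "norm (G x) \<le> norm c * B" for x
    using mult_left_mono[OF b1[of "vec_upd j a x"] norm_ge_zero[of c]] unfolding G_def by (simp add: norm_mult)
  have bS: "norm (g1 x + G x) \<le> 2 * B + norm c * B" for x
    using norm_triangle_ineq[of "g1 x" "G x"] bg1[of x] bG[of x] by simp
  have "of_real (1 + 4 * pi^2 * (k $ j)^2) * partial_fourier a k (insert j I) g y
      = partial_fourier a k (insert j I) (\<lambda>x. g1 x + G x) y"
  proof (rule partial_fourier_insert_cong[OF I c0 b0 _ bS])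
    show "continuous_on UNIV (\<lambda>x. g1 x + G x)" by (intro continuous_intros cg1 cG)
    fix w
    have "fiber_fourier a (k $ j) j (\<lambda>x. g1 x + G x) w = fiber_fourier a (k $ j) j g1 w + fiber_fourier a (k $ j) j G w"
      by (rule fiber_fourier_add[OF cg1 cG])
    also have "fiber_fourier a (k $ j) j G w = 2 * fourier_kernel (k $ j) a * partials [j] g (vec_upd j a w)"
      unfolding G_def fiber_fourier_conj_kernel[where h = "\<lambda>x. c * partials [j] g x", OF less_imp_le[OF a]]
      using a by (simp add: c_def)
    also have "fiber_fourier a (k $ j) j g1 w + \<dots> = of_real (1 + 4 * pi^2 * (k $ j)^2) * fiber_fourier a (k $ j) j g w"
      unfolding g1_def by (rule fiber_fourier_by_parts[OF less_imp_le[OF a] kL d0 d1 c2 ev, symmetric])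
    finally show "of_real (1 + 4 * pi^2 * (k $ j)^2) * fiber_fourier a (k $ j) j g w
        = fiber_fourier a (k $ j) j (\<lambda>x. g1 x + G x) w" by (rule sym)
  qed
  also have "\<dots> = partial_fourier a k (insert j I) g1 y + partial_fourier a k (insert j I) G y"
    by (rule partial_fourier_add[OF _ cg1 bg1 cG bG]) (use I in simp)
  also have "partial_fourier a k (insert j I) G y
      = of_real (2 * a) * partial_fourier a k I (\<lambda>x. c * partials [j] g (vec_upd j a x)) y"
    unfolding G_def
    by (rule partial_fourier_insert_conj_kernel[OF I less_imp_le[OF a] continuous_on_mult_left[OF c1]])
       (use mult_left_mono[OF b1 norm_ge_zero[of c]] in \<open>simp add: norm_mult\<close>)
  also have "\<dots> = 2 * fourier_kernel (k $ j) a * partial_fourier a k I (\<lambda>x. partials [j] g (vec_upd j a x)) y"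
    unfolding partial_fourier_mult_left using a by (simp add: c_def)
  finally show ?thesis unfolding g1_def .
qed

section \<open>Iterated integration by parts\<close>

definition cauchy_weight :: "real \<Rightarrow> real" where
  "cauchy_weight t = 1 / (1 + t^2)"

lemma cauchy_weight_pos: "cauchy_weight t > 0"
  unfolding cauchy_weight_def by (simp add: add_pos_nonneg)

lemma cauchy_weight_le_1: "cauchy_weight t \<le> 1"
  unfolding cauchy_weight_def by (simp add: divide_le_eq_1 add_pos_nonneg)

lemma prod_cauchy_weight_nonneg: "0 \<le> (\<Prod>i\<in>I. cauchy_weight (x $ i))"
  by (intro prod_nonneg) (simp add: less_imp_le[OF cauchy_weight_pos])

lemma prod_cauchy_weight_le_1: "(\<Prod>i\<in>I. cauchy_weight (x $ i)) \<le> 1"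
  by (intro prod_le_1) (auto simp: cauchy_weight_le_1 less_imp_le[OF cauchy_weight_pos])

text \<open>The invariant of the iterated integration by parts: \<open>R\<close> are the directions in which we still
  integrate by parts, \<open>I\<close> the coordinates still integrated over.\<close>

definition admissible :: "'d set \<Rightarrow> 'd set \<Rightarrow> (real^'d::finite \<Rightarrow> complex) \<Rightarrow> real \<Rightarrow> bool" where
  "admissible R I g M \<longleftrightarrow>
    (\<forall>ls. set ls \<subseteq> R \<longrightarrow> (\<forall>x i. i \<in> R \<longrightarrow> (\<lambda>s. partials ls g (x + s *\<^sub>R axis i 1)) differentiable (at 0))
         \<and> continuous_on UNIV (partials ls g)) \<and>
    (\<forall>i\<in>R. \<forall>x. g (reflect i x) = g x) \<and>
    (\<forall>ls x. set ls \<subseteq> R \<and> (\<forall>i. count_list ls i \<le> 2) \<longrightarrow>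
       norm (partials ls g x) \<le> M * (\<Prod>i\<in>I. cauchy_weight (x $ i)))"

lemma admissibleI:
  assumes "\<And>ls x i. set ls \<subseteq> R \<Longrightarrow> i \<in> R \<Longrightarrow> (\<lambda>s. partials ls g (x + s *\<^sub>R axis i 1)) differentiable (at 0)"
    and "\<And>ls. set ls \<subseteq> R \<Longrightarrow> continuous_on UNIV (partials ls g)"
    and "\<And>i x. i \<in> R \<Longrightarrow> g (reflect i x) = g x"
    and "\<And>ls x. set ls \<subseteq> R \<Longrightarrow> \<forall>i. count_list ls i \<le> 2 \<Longrightarrow>
           norm (partials ls g x) \<le> M * (\<Prod>i\<in>I. cauchy_weight (x $ i))"
  shows "admissible R I g M"
  using assms unfolding admissible_def by blast

lemma
  assumes "admissible R I g M"
  shows admissible_differentiable: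
      "\<And>ls x i. set ls \<subseteq> R \<Longrightarrow> i \<in> R \<Longrightarrow> (\<lambda>s. partials ls g (x + s *\<^sub>R axis i 1)) differentiable (at 0)"
    and admissible_continuous_on: "\<And>ls. set ls \<subseteq> R \<Longrightarrow> continuous_on UNIV (partials ls g)"
    and admissible_even: "\<And>i x. i \<in> R \<Longrightarrow> g (reflect i x) = g x"
    and admissible_weighted_bound: "\<And>ls x. set ls \<subseteq> R \<Longrightarrow> \<forall>i. count_list ls i \<le> 2 \<Longrightarrow>
           norm (partials ls g x) \<le> M * (\<Prod>i\<in>I. cauchy_weight (x $ i))"
  using assms unfolding admissible_def by blast+

lemma admissible_nonneg:
  fixes g :: "real^'d::finite \<Rightarrow> complex"
  assumes "admissible R I g M"
  shows "M \<ge> 0"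
proof -
  have "norm (partials [] g 0) \<le> M * (\<Prod>i\<in>I. cauchy_weight ((0 :: real^'d) $ i))"
    by (rule admissible_weighted_bound[OF assms]) simp_all
  then have "0 \<le> M * (\<Prod>i\<in>I. cauchy_weight ((0 :: real^'d) $ i))"
    by (rule order_trans[OF norm_ge_zero])
  moreover have "(\<Prod>i\<in>I. cauchy_weight ((0 :: real^'d) $ i)) > 0"
    by (intro prod_pos) (simp add: cauchy_weight_pos)
  ultimately show ?thesis by (simp add: zero_le_mult_iff)
qed

lemma admissible_bound:
  assumes "admissible R I g M" "set ls \<subseteq> R" "\<forall>i. count_list ls i \<le> 2"
  shows "norm (partials ls g x) \<le> M"
proof -
  have "norm (partials ls g x) \<le> M * (\<Prod>i\<in>I. cauchy_weight (x $ i))"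
    by (rule admissible_weighted_bound[OF assms])
  also have "\<dots> \<le> M * 1"
    by (intro mult_left_mono prod_cauchy_weight_le_1 admissible_nonneg[OF assms(1)])
  finally show ?thesis by simp
qed

lemma reflect_add_axis: "l \<noteq> i \<Longrightarrow> reflect i (x + t *\<^sub>R axis l 1) = reflect i x + t *\<^sub>R axis l 1"
  unfolding reflect_def by (auto simp: vec_eq_iff axis_def)

lemma partials_reflect:
  assumes "i \<notin> set ls" "\<And>x. g (reflect i x) = g x"
  shows "partials ls g (reflect i x) = partials ls g x"
  using assms(1)
proof (induction ls arbitrary: x)
  case (Cons l ls)
  then have li: "l \<noteq> i" and IH: "\<And>x. partials ls g (reflect i x) = partials ls g x" by auto
  have "(\<lambda>t. partials ls g (reflect i x + t *\<^sub>R axis l 1)) = (\<lambda>t. partials ls g (x + t *\<^sub>R axis l 1))"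
    using IH by (simp add: reflect_add_axis[OF li, symmetric])
  then show ?case by (simp add: partial_deriv_def)
qed (simp add: assms(2))

lemma partials_vec_upd:
  assumes "j \<notin> set ls"
  shows "partials ls (\<lambda>x. h (vec_upd j a x)) = (\<lambda>x. partials ls h (vec_upd j a x))"
  using assms
proof (induction ls)
  case (Cons l ls)
  then have lj: "l \<noteq> j" and IH: "partials ls (\<lambda>x. h (vec_upd j a x)) = (\<lambda>x. partials ls h (vec_upd j a x))"
    by auto
  show ?case
  proof
    fix x
    have "(\<lambda>t. partials ls h (vec_upd j a (x + t *\<^sub>R axis l 1))) = (\<lambda>t. partials ls h (vec_upd j a x + t *\<^sub>R axis l 1))"
      by (simp add: vec_upd_add_axis[OF lj])
    then show "partials (l # ls) (\<lambda>x. h (vec_upd j a x)) x = partials (l # ls) h (vec_upd j a x)"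
      by (simp add: IH partial_deriv_def)
  qed
qed simp

lemma partials_diff_second_partial:
  assumes d: "\<And>ls x i. set ls \<subseteq> R \<Longrightarrow> i \<in> R \<Longrightarrow> (\<lambda>s. partials ls g (x + s *\<^sub>R axis i 1)) differentiable (at 0)"
    and j: "j \<in> R" and ls: "set ls \<subseteq> R"
  shows "partials ls (\<lambda>x. g x - partials [j, j] g x) = (\<lambda>x. partials ls g x - partials (ls @ [j, j]) g x)"
  using ls
proof (induction ls)
  case (Cons l ls)
  from Cons have l: "l \<in> R" and lsR: "set ls \<subseteq> R" by auto
  show ?case
  proof
    fix x
    have d1: "(\<lambda>s. partials ls g (x + s *\<^sub>R axis l 1)) differentiable (at 0)" by (rule d[OF lsR l])
    have d2: "(\<lambda>s. partials (ls @ [j, j]) g (x + s *\<^sub>R axis l 1)) differentiable (at 0)"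
      by (rule d) (use lsR j l in auto)
    show "partials (l # ls) (\<lambda>x. g x - partials [j, j] g x) x
        = partials (l # ls) g x - partials ((l # ls) @ [j, j]) g x"
      unfolding append_Cons partials.simps(2)[of l] Cons.IH[OF lsR] partial_deriv_def
      by (rule vector_derivative_diff_at[OF d1 d2])
  qed
qed simp

lemma admissible_minus_second_partial:
  assumes g: "admissible R I g M" and j: "j \<in> R"
  shows "admissible (R - {j}) I (\<lambda>x. g x - partials [j, j] g x) (2 * M)"
proof -
  have pd: "partials ls (\<lambda>x. g x - partials [j, j] g x) = (\<lambda>x. partials ls g x - partials (ls @ [j, j]) g x)"
    if "set ls \<subseteq> R - {j}" for ls
    using partials_diff_second_partial[OF admissible_differentiable[OF g] j] that by auto
  show ?thesis
  proof (rule admissibleI)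
    fix ls x i assume ls: "set ls \<subseteq> R - {j}" and i: "i \<in> R - {j}"
    then have "set ls \<subseteq> R" "set (ls @ [j, j]) \<subseteq> R" using j by auto
    then show "(\<lambda>s. partials ls (\<lambda>x. g x - partials [j, j] g x) (x + s *\<^sub>R axis i 1)) differentiable (at 0)"
      unfolding pd[OF ls] using admissible_differentiable[OF g, of _ i x] i by (auto intro!: derivative_intros)
  next
    fix ls assume ls: "set ls \<subseteq> R - {j}"
    then have "set ls \<subseteq> R" "set (ls @ [j, j]) \<subseteq> R" using j by auto
    then show "continuous_on UNIV (partials ls (\<lambda>x. g x - partials [j, j] g x))"
      unfolding pd[OF ls] by (intro continuous_intros admissible_continuous_on[OF g])
  next
    fix i x assume i: "i \<in> R - {j}"
    then have "partials [j, j] g (reflect i x) = partials [j, j] g x"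
      by (intro partials_reflect admissible_even[OF g]) auto
    then show "g (reflect i x) - partials [j, j] g (reflect i x) = g x - partials [j, j] g x"
      using admissible_even[OF g, of i x] i by simp
  next
    fix ls x assume ls: "set ls \<subseteq> R - {j}" and cnt: "\<forall>i. count_list ls i \<le> 2"
    have "count_list ls j = 0" using ls by (auto simp: count_list_0_iff)
    then have "\<forall>i. count_list (ls @ [j, j]) i \<le> 2" using cnt by auto
    moreover have "set ls \<subseteq> R" "set (ls @ [j, j]) \<subseteq> R" using ls j by auto
    ultimately have "norm (partials ls g x) + norm (partials (ls @ [j, j]) g x)
        \<le> M * (\<Prod>i\<in>I. cauchy_weight (x $ i)) + M * (\<Prod>i\<in>I. cauchy_weight (x $ i))"
      using cnt by (intro add_mono admissible_weighted_bound[OF g])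
    then show "norm (partials ls (\<lambda>x. g x - partials [j, j] g x) x) \<le> 2 * M * (\<Prod>i\<in>I. cauchy_weight (x $ i))"
      unfolding pd[OF ls] using norm_triangle_ineq4[of "partials ls g x" "partials (ls @ [j, j]) g x"] by simp
  qed
qed

lemma prod_cauchy_weight_vec_upd:
  assumes "j \<in> I" "finite I"
  shows "(\<Prod>i\<in>I. cauchy_weight (vec_upd j a x $ i)) = cauchy_weight a * (\<Prod>i\<in>I - {j}. cauchy_weight (x $ i))"
proof -
  have "(\<Prod>i\<in>I - {j}. cauchy_weight (vec_upd j a x $ i)) = (\<Prod>i\<in>I - {j}. cauchy_weight (x $ i))"
    by (intro prod.cong) (auto simp: vec_upd_def)
  then show ?thesis using assms by (simp add: prod.remove)
qed

lemma admissible_vec_upd_partial: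
  assumes g: "admissible R I g M" and j: "j \<in> R" "j \<in> I"
  shows "admissible (R - {j}) (I - {j}) (\<lambda>x. partials [j] g (vec_upd j a x)) M"
proof -
  have ps: "partials ls (\<lambda>x. partials [j] g (vec_upd j a x)) = (\<lambda>x. partials (ls @ [j]) g (vec_upd j a x))"
    if "set ls \<subseteq> R - {j}" for ls
    using partials_vec_upd[of j ls "partials [j] g" a] that by (auto simp: partials_append)
  show ?thesis
  proof (rule admissibleI)
    fix ls x i assume ls: "set ls \<subseteq> R - {j}" and i: "i \<in> R - {j}"
    then have "(\<lambda>s. partials (ls @ [j]) g (vec_upd j a x + s *\<^sub>R axis i 1)) differentiable (at 0)"
      using j by (intro admissible_differentiable[OF g]) auto
    then show "(\<lambda>s. partials ls (\<lambda>x. partials [j] g (vec_upd j a x)) (x + s *\<^sub>R axis i 1)) differentiable (at 0)"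
      unfolding ps[OF ls] using i by (simp add: vec_upd_add_axis)
  next
    fix ls assume ls: "set ls \<subseteq> R - {j}"
    then have "continuous_on UNIV (partials (ls @ [j]) g)" using j by (intro admissible_continuous_on[OF g]) auto
    then show "continuous_on UNIV (partials ls (\<lambda>x. partials [j] g (vec_upd j a x)))"
      unfolding ps[OF ls] by (rule continuous_on_compose2[OF _ continuous_on_vec_upd]) auto
  next
    fix i x assume i: "i \<in> R - {j}"
    have "partials [j] g (reflect i y) = partials [j] g y" for y
      using i by (intro partials_reflect admissible_even[OF g]) auto
    then show "partials [j] g (vec_upd j a (reflect i x)) = partials [j] g (vec_upd j a x)"
      using i by (simp add: reflect_vec_upd_commute)
  next
    fix ls x assume ls: "set ls \<subseteq> R - {j}" and cnt: "\<forall>i. count_list ls i \<le> 2"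
    have "count_list ls j = 0" using ls by (auto simp: count_list_0_iff)
    then have "\<forall>i. count_list (ls @ [j]) i \<le> 2" using cnt by auto
    then have "norm (partials (ls @ [j]) g (vec_upd j a x)) \<le> M * (\<Prod>i\<in>I. cauchy_weight (vec_upd j a x $ i))"
      using ls j by (intro admissible_weighted_bound[OF g]) auto
    also have "\<dots> = M * cauchy_weight a * (\<Prod>i\<in>I - {j}. cauchy_weight (x $ i))"
      using j by (simp add: prod_cauchy_weight_vec_upd)
    also have "\<dots> \<le> M * 1 * (\<Prod>i\<in>I - {j}. cauchy_weight (x $ i))"
      by (intro mult_right_mono mult_left_mono cauchy_weight_le_1 admissible_nonneg[OF g] prod_cauchy_weight_nonneg)
    finally show "norm (partials ls (\<lambda>x. partials [j] g (vec_upd j a x)) x) \<le> M * (\<Prod>i\<in>I - {j}. cauchy_weight (x $ i))"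
      unfolding ps[OF ls] by simp
  qed
qed

lemma partial_fourier_by_parts_admissible:
  assumes g: "admissible R I g M" and j: "j \<in> R" "j \<in> I" and a: "a > 0" and kL: "k $ j * (2 * a) \<in> \<int>"
  shows "of_real (1 + 4 * pi^2 * (k $ j)^2) * partial_fourier a k I g y
       = partial_fourier a k I (\<lambda>x. g x - partials [j, j] g x) y
         + 2 * fourier_kernel (k $ j) a * partial_fourier a k (I - {j}) (\<lambda>x. partials [j] g (vec_upd j a x)) y"
proof -
  have d: "(\<lambda>s. partials ls g (x + s *\<^sub>R axis j 1)) differentiable (at 0)" if "set ls \<subseteq> {j}" for ls x
    using admissible_differentiable[OF g] that j by blast
  have c: "continuous_on UNIV (partials ls g)" if "set ls \<subseteq> {j}" for ls
    using admissible_continuous_on[OF g] that j by blast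
  have b: "norm (partials ls g x) \<le> M" if "set ls \<subseteq> {j}" "\<forall>i. count_list ls i \<le> 2" for ls x
    using admissible_bound[OF g] that j by blast
  have "of_real (1 + 4 * pi^2 * (k $ j)^2) * partial_fourier a k (insert j (I - {j})) g y
       = partial_fourier a k (insert j (I - {j})) (\<lambda>x. g x - partials [j, j] g x) y
         + 2 * fourier_kernel (k $ j) a * partial_fourier a k (I - {j}) (\<lambda>x. partials [j] g (vec_upd j a x)) y"
    by (rule partial_fourier_by_parts[OF _ _ a kL, of _ g M])
       (use d[of "[]"] d[of "[j]"] c[of "[]"] c[of "[j]"] c[of "[j, j]"] b[of "[]"] b[of "[j]"] b[of "[j, j]"]
          admissible_even[OF g j(1)] in auto)
  then show ?thesis using j(2) by (simp add: insert_absorb)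
qed

lemma continuous_on_cauchy_weight: "continuous_on S cauchy_weight"
proof -
  have "1 + t^2 \<noteq> (0::real)" for t
    using add_pos_nonneg[OF zero_less_one zero_le_power2[of t]] by simp
  then show ?thesis unfolding cauchy_weight_def by (intro continuous_intros) auto
qed

lemma integrable_Ico_cauchy_weight: "integrable lborel (\<lambda>t::real. indicator {a..<b} t * cauchy_weight t)"
  using integrable_indicator_Ico_continuous[OF continuous_on_cauchy_weight] by simp

lemma integral_Ico_cauchy_weight_le_pi:
  assumes "a \<ge> 0"
  shows "(\<integral>t. indicator {-a..<a} t * cauchy_weight t \<partial>lborel) \<le> pi"
proof -
  have "(\<integral>t. indicator {-a..<a} t * cauchy_weight t \<partial>lborel) = (\<integral>t. indicator {-a..a} t *\<^sub>R cauchy_weight t \<partial>lborel)"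
    using integral_indicator_Ico_eq_Icc[of cauchy_weight "-a" a]
    by (simp add: borel_measurable_continuous_onI[OF continuous_on_cauchy_weight])
  also have "\<dots> = arctan a - arctan (- a)"
  proof (rule integral_FTC_atLeastAtMost)
    show "(arctan has_vector_derivative cauchy_weight x) (at x within {-a..a})" for x
      using DERIV_arctan[of x]
      by (simp add: cauchy_weight_def power2_eq_square inverse_eq_divide
          has_real_derivative_iff_has_vector_derivative has_vector_derivative_at_within)
  qed (use assms continuous_on_cauchy_weight in auto)
  also have "\<dots> = 2 * arctan a" by (simp add: arctan_minus)
  also have "\<dots> \<le> pi" using arctan_ubound[of a] by simp
  finally show ?thesis .
qed

lemma norm_partial_fourier_le:
  fixes g :: "real^'d::finite \<Rightarrow> complex"
  assumes a: "a > 0" and c: "continuous_on UNIV g"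
    and b: "\<And>x. norm (g x) \<le> M * (\<Prod>i\<in>I. cauchy_weight (x $ i))" and M: "M \<ge> 0"
  shows "norm (partial_fourier a k I g y) \<le> pi ^ card I * M"
proof -
  interpret finite_product_sigma_finite "\<lambda>_::'d. lborel :: real measure" I by standard simp
  have "norm (partial_fourier a k I g y) \<le> (\<integral>z. norm (box_kernel a k I z * g (vec_merge I z y)) \<partial>(\<Pi>\<^sub>M i\<in>I. lborel))"
    unfolding partial_fourier_def by (rule integral_norm_bound)
  also have "\<dots> \<le> (\<integral>z. M * (\<Prod>i\<in>I. indicator {-a..<a} (z i) * cauchy_weight (z i)) \<partial>(\<Pi>\<^sub>M i\<in>I. lborel))"
  proof (rule integral_mono')
    show "integrable (\<Pi>\<^sub>M i\<in>I. lborel) (\<lambda>z. M * (\<Prod>i\<in>I. indicator {-a..<a} (z i) * cauchy_weight (z i)))"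
      by (intro integrable_mult_right product_integrable_prod integrable_Ico_cauchy_weight) simp
    fix z
    have "(\<Prod>i\<in>I. cauchy_weight (vec_merge I z y $ i)) = (\<Prod>i\<in>I. cauchy_weight (z i))"
      by (intro prod.cong) (auto simp: vec_merge_def)
    then have "norm (g (vec_merge I z y)) \<le> M * (\<Prod>i\<in>I. cauchy_weight (z i))"
      using b[of "vec_merge I z y"] by simp
    then have "(\<Prod>i\<in>I. indicator {-a..<a} (z i)) * norm (g (vec_merge I z y))
        \<le> (\<Prod>i\<in>I. indicator {-a..<a} (z i)) * (M * (\<Prod>i\<in>I. cauchy_weight (z i)))"
      by (intro mult_left_mono prod_nonneg) auto
    then show "norm (box_kernel a k I z * g (vec_merge I z y))
        \<le> M * (\<Prod>i\<in>I. indicator {-a..<a} (z i) * cauchy_weight (z i))"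
      by (simp add: norm_mult norm_box_kernel prod.distrib mult_ac)
    show "0 \<le> M * (\<Prod>i\<in>I. indicator {-a..<a} (z i) * cauchy_weight (z i))"
      using M cauchy_weight_pos by (intro mult_nonneg_nonneg prod_nonneg) (auto simp: less_imp_le)
  qed
  also have "\<dots> = M * (\<Prod>i\<in>I. (\<integral>t. indicator {-a..<a} t * cauchy_weight t \<partial>lborel))"
    by (simp only: integral_mult_right_zero product_integral_prod[OF finite integrable_Ico_cauchy_weight])
  also have "\<dots> \<le> M * (\<Prod>i\<in>I. pi)"
    using a cauchy_weight_pos
    by (intro mult_left_mono M prod_mono conjI integral_Ico_cauchy_weight_le_pi integral_nonneg)
       (auto simp: less_imp_le)
  finally show ?thesis by (simp add: mult.commute)
qed

text \<open>Each direction in \<open>R\<close> costs a factor \<open>2\<close> for \<open>g - \<partial>\<^sub>j\<^sup>2 g\<close> and \<open>2\<close> for the boundary term,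
  whence \<open>4 ^ card R\<close>.\<close>

lemma partial_fourier_decay:
  fixes k :: "real^'d::finite"
  assumes a: "a > 0" and kL: "\<And>i. k $ i * (2 * a) \<in> \<int>"
  shows "R \<subseteq> I \<Longrightarrow> admissible R I g M \<Longrightarrow>
     (\<Prod>i\<in>R. 1 + 4 * pi^2 * (k $ i)^2) * norm (partial_fourier a k I g y) \<le> 4 ^ card R * pi ^ card I * M"
proof (induction R arbitrary: I g M y rule: finite_induct[OF finite])
  case 1
  show ?case
    using norm_partial_fourier_le[OF a admissible_continuous_on[OF "1.prems"(2), of "[]"]
        admissible_weighted_bound[OF "1.prems"(2), of "[]"] admissible_nonneg[OF "1.prems"(2)]]
    by simp
next
  case (2 j R)
  have jI: "j \<in> I" and RI: "R \<subseteq> I" "R \<subseteq> I - {j}" using "2.prems"(1) "2.hyps"(2) by auto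
  note g = "2.prems"(2)
  define P where "P = (\<Prod>i\<in>R. 1 + 4 * pi^2 * (k $ i)^2)"
  define g1 where "g1 = (\<lambda>x. g x - partials [j, j] g x)"
  define g2 where "g2 = (\<lambda>x. partials [j] g (vec_upd j a x))"
  have P: "P \<ge> 0" unfolding P_def by (intro prod_nonneg) (auto intro: add_nonneg_nonneg)
  have M: "M \<ge> 0" by (rule admissible_nonneg[OF g])
  have "admissible R I g1 (2 * M)"
    using admissible_minus_second_partial[OF g, of j] "2.hyps"(2) unfolding g1_def by simp
  then have IH1: "P * norm (partial_fourier a k I g1 y) \<le> 4 ^ card R * pi ^ card I * (2 * M)"
    unfolding P_def by (rule "2.IH"[OF RI(1)])
  have "admissible R (I - {j}) g2 M"
    using admissible_vec_upd_partial[OF g _ jI, of a] "2.hyps"(2) unfolding g2_def by simp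
  then have "P * norm (partial_fourier a k (I - {j}) g2 y) \<le> 4 ^ card R * pi ^ card (I - {j}) * M"
    unfolding P_def by (rule "2.IH"[OF RI(2)])
  also have "\<dots> \<le> 4 ^ card R * pi ^ card I * M"
    using jI pi_gt3 by (intro mult_right_mono mult_left_mono power_increasing M card_mono) auto
  finally have IH2: "P * norm (partial_fourier a k (I - {j}) g2 y) \<le> 4 ^ card R * pi ^ card I * M" .
  have "0 \<le> 1 + 4 * pi^2 * (k $ j)^2" by (intro add_nonneg_nonneg) auto
  then have "norm (complex_of_real (1 + 4 * pi^2 * (k $ j)^2)) = 1 + 4 * pi^2 * (k $ j)^2"
    by (simp only: norm_of_real abs_of_nonneg)
  then have "(\<Prod>i\<in>insert j R. 1 + 4 * pi^2 * (k $ i)^2) * norm (partial_fourier a k I g y)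
      = P * norm (of_real (1 + 4 * pi^2 * (k $ j)^2) * partial_fourier a k I g y)"
    using "2.hyps" unfolding P_def norm_mult by (simp add: mult_ac)
  also have "\<dots> = P * norm (partial_fourier a k I g1 y + 2 * fourier_kernel (k $ j) a * partial_fourier a k (I - {j}) g2 y)"
    unfolding g1_def g2_def partial_fourier_by_parts_admissible[OF g insertI1 jI a kL] ..
  also have "\<dots> \<le> P * (norm (partial_fourier a k I g1 y) + 2 * norm (partial_fourier a k (I - {j}) g2 y))"
    by (intro mult_left_mono P) (auto intro: order_trans[OF norm_triangle_ineq] simp: norm_mult)
  also have "\<dots> = P * norm (partial_fourier a k I g1 y) + 2 * (P * norm (partial_fourier a k (I - {j}) g2 y))"
    by (simp add: algebra_simps)
  also have "\<dots> \<le> 4 ^ card (insert j R) * pi ^ card I * M"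
    using IH1 IH2 "2.hyps" by simp
  finally show ?case .
qed

section \<open>Schwartz functions on the box\<close>

lemma measurable_vec_lambda_PiM: "vec_lambda \<in> (\<Pi>\<^sub>M i\<in>(UNIV::'d::finite set). lborel) \<rightarrow>\<^sub>M (borel :: (real^'d) measure)"
  using borel_measurable_vec_lambda[of "\<lambda>z i. z i" "\<Pi>\<^sub>M i\<in>(UNIV::'d set). lborel"]
  by (simp add: measurable_component_singleton)

lemma prod_Basis_cart: "(\<Prod>b\<in>(Basis :: (real^'d::finite) set). F b) = (\<Prod>i\<in>UNIV. F (axis i 1))"
proof -
  have B: "(Basis :: (real^'d) set) = (\<lambda>i. axis i 1) ` UNIV"
    using axis_inverse by (auto simp: Basis_vec_def)
  have "inj_on (\<lambda>i::'d. axis i (1::real)) UNIV" by (auto simp: inj_on_def axis_eq_axis)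
  then show ?thesis unfolding B by (simp add: prod.reindex)
qed

lemma lborel_cart_eq_distr_PiM:
  "(lborel :: (real^'d::finite) measure) = distr (\<Pi>\<^sub>M i\<in>(UNIV::'d set). lborel) borel vec_lambda"
proof (rule lborel_eqI)
  interpret finite_product_sigma_finite "\<lambda>_::'d. lborel :: real measure" UNIV by standard simp
  fix l u :: "real^'d"
  assume le: "\<And>b. b \<in> Basis \<Longrightarrow> l \<bullet> b \<le> u \<bullet> b"
  have le': "l $ i \<le> u $ i" for i using le[of "axis i 1"] by (simp add: inner_axis)
  have pre: "vec_lambda -` box l u \<inter> space (\<Pi>\<^sub>M i\<in>(UNIV::'d set). lborel) = (\<Pi>\<^sub>E i\<in>UNIV. {l $ i <..< u $ i})"
    by (auto simp: space_PiM mem_box_cart PiE_iff extensional_def)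
  have "emeasure (distr (\<Pi>\<^sub>M i\<in>(UNIV::'d set). lborel) borel vec_lambda) (box l u)
      = emeasure (\<Pi>\<^sub>M i\<in>(UNIV::'d set). lborel) (\<Pi>\<^sub>E i\<in>UNIV. {l $ i <..< u $ i})"
    by (subst emeasure_distr[OF measurable_vec_lambda_PiM]) (auto simp: pre)
  also have "\<dots> = (\<Prod>i\<in>UNIV. emeasure lborel {l $ i <..< u $ i})"
    by (rule emeasure_PiM) auto
  also have "\<dots> = (\<Prod>i\<in>UNIV. ennreal (u $ i - l $ i))"
    using le' by (intro prod.cong) auto
  also have "\<dots> = ennreal (\<Prod>i\<in>UNIV. (u $ i - l $ i))"
    using le' by (intro prod_ennreal) auto
  also have "(\<Prod>i\<in>UNIV. (u $ i - l $ i)) = (\<Prod>b\<in>Basis. (u - l) \<bullet> b)"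
    unfolding prod_Basis_cart by (simp add: inner_axis)
  finally show "emeasure (distr (\<Pi>\<^sub>M i\<in>(UNIV::'d set). lborel) borel vec_lambda) (box l u)
      = (\<Prod>b\<in>Basis. (u - l) \<bullet> b)" .
qed simp

lemma indicator_torus_box: "indicator (torus_box L) x = (\<Prod>j\<in>UNIV. indicator {-(L/2)..<L/2} (x $ j) :: real)"
  unfolding torus_box_def by (auto simp: indicator_def)

lemma fourier_box_eq_partial_fourier:
  fixes f :: "real^'d::finite \<Rightarrow> complex"
  assumes c: "continuous_on UNIV f"
  shows "fourier_box L f k = partial_fourier (L/2) k UNIV f y"
proof -
  define F where "F x = exp (- (2 * pi * \<i> * complex_of_real (k \<bullet> x))) * f x" for x :: "real^'d"
  have [measurable]: "f \<in> borel_measurable borel" by (rule borel_measurable_continuous_onI[OF c])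
  have "(\<lambda>x::real^'d. x $ j) \<in> borel_measurable borel" for j
    by (intro borel_measurable_continuous_onI continuous_intros)
  then have meas: "(\<lambda>x. indicator (torus_box L) x *\<^sub>R F x) \<in> borel_measurable borel"
    unfolding indicator_torus_box F_def by measurable
  have "fourier_box L f k = (\<integral>x. indicator (torus_box L) x *\<^sub>R F x \<partial>lborel)"
    unfolding fourier_box_def set_lebesgue_integral_def F_def ..
  also have "\<dots> = (\<integral>z. indicator (torus_box L) (vec_lambda z) *\<^sub>R F (vec_lambda z) \<partial>(\<Pi>\<^sub>M i\<in>(UNIV::'d set). lborel))"
    by (subst lborel_cart_eq_distr_PiM) (rule integral_distr[OF measurable_vec_lambda_PiM meas])
  also have "\<dots> = partial_fourier (L/2) k UNIV f y"
    unfolding partial_fourier_def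
  proof (intro Bochner_Integration.integral_cong refl)
    fix z :: "'d \<Rightarrow> real"
    have "exp (- (2 * pi * \<i> * complex_of_real (k \<bullet> vec_lambda z))) = (\<Prod>i\<in>UNIV. fourier_kernel (k $ i) (z i))"
      unfolding fourier_kernel_def inner_vec_def
      by (simp add: exp_sum[symmetric] sum_negf[symmetric] sum_distrib_left)
    then show "indicator (torus_box L) (vec_lambda z) *\<^sub>R F (vec_lambda z) = box_kernel (L/2) k UNIV z * f (vec_merge UNIV z y)"
      unfolding F_def box_kernel_def indicator_torus_box prod.distrib vec_merge_def
      by (simp add: scaleR_conv_of_real of_real_prod of_real_indicator)
  qed
  finally show ?thesis .
qed

lemma schwartz_smooth: "schwartz f \<Longrightarrow> smooth f"
  unfolding schwartz_def smooth_def by blast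

lemma jbr_power_even: "jbr x ^ (2 * n) = (1 + norm x ^ 2) ^ n"
  unfolding jbr_def by (simp add: power_mult)

lemma one_plus_square_power_le:
  fixes r :: real
  assumes "r \<ge> 0"
  shows "(1 + r^2) ^ n \<le> 2 ^ n * (1 + r ^ (2 * n))"
proof (cases "r \<le> 1")
  case True
  then have "(1 + r^2) ^ n \<le> 2 ^ n" using assms by (intro power_mono) (auto simp: power_le_one)
  also have "\<dots> \<le> 2 ^ n * (1 + r ^ (2 * n))" using assms by simp
  finally show ?thesis .
next
  case False
  then have "1 + r^2 \<le> 2 * r^2" by (simp add: power2_eq_square) (metis less_eq_real_def mult_le_cancel_left1 not_le order_less_le_trans zero_less_one)
  then have "(1 + r^2) ^ n \<le> (2 * r^2) ^ n" by (intro power_mono) auto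
  also have "\<dots> \<le> 2 ^ n * (1 + r ^ (2 * n))" by (simp add: power_mult_distrib power_mult)
  finally show ?thesis .
qed

lemma bdd_above_schwartz_weighted:
  fixes f :: "real^'d::finite \<Rightarrow> complex"
  assumes s: "schwartz f"
  shows "bdd_above (range (\<lambda>x. \<bar>jbr x ^ (2 * CARD('d))\<bar> * cmod (partials js f x)))"
proof -
  obtain B0 where B0: "\<And>x. norm x ^ 0 * cmod (partials js f x) \<le> B0"
    using s unfolding schwartz_def by blast
  obtain B1 where B1: "\<And>x. norm x ^ (2 * CARD('d)) * cmod (partials js f x) \<le> B1"
    using s unfolding schwartz_def by blast
  show ?thesis
  proof (rule bdd_aboveI2)
    fix x :: "real^'d"
    have "\<bar>jbr x ^ (2 * CARD('d))\<bar> * cmod (partials js f x) = (1 + norm x ^ 2) ^ CARD('d) * cmod (partials js f x)"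
      by (simp add: jbr_power_even)
    also have "\<dots> \<le> 2 ^ CARD('d) * (1 + norm x ^ (2 * CARD('d))) * cmod (partials js f x)"
      by (intro mult_right_mono one_plus_square_power_le) auto
    also have "\<dots> = 2 ^ CARD('d) * (norm x ^ 0 * cmod (partials js f x) + norm x ^ (2 * CARD('d)) * cmod (partials js f x))"
      by (simp add: algebra_simps)
    also have "\<dots> \<le> 2 ^ CARD('d) * (B0 + B1)" by (intro mult_left_mono add_mono B0 B1) auto
    finally show "\<bar>jbr x ^ (2 * CARD('d))\<bar> * cmod (partials js f x) \<le> 2 ^ CARD('d) * (B0 + B1)" .
  qed
qed

lemma finite_multi_indices_le_2: "finite {\<alpha>::'d::finite \<Rightarrow> nat. \<forall>j. \<alpha> j \<le> 2}"
proof -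
  have "{\<alpha>::'d \<Rightarrow> nat. \<forall>j. \<alpha> j \<le> 2} = PiE UNIV (\<lambda>_. {..2})" by (auto simp: PiE_iff)
  then show ?thesis by (simp add: finite_PiE)
qed

lemma
  fixes f :: "real^'d::finite \<Rightarrow> complex"
  assumes s: "schwartz f"
  shows schwartz_seminorm_ge: "\<forall>j. \<alpha> j \<le> 2 \<Longrightarrow> \<bar>jbr x ^ (2 * CARD('d))\<bar> * cmod (dmulti \<alpha> f x) \<le> schwartz_seminorm f"
    and schwartz_seminorm_nonneg: "schwartz_seminorm f \<ge> 0"
proof -
  define T where "T \<beta> = (SUP x. \<bar>jbr x ^ (2 * CARD('d))\<bar> * cmod (dmulti \<beta> f x))" for \<beta>
  have bdd: "bdd_above (range (\<lambda>x. \<bar>jbr x ^ (2 * CARD('d))\<bar> * cmod (dmulti \<beta> f x)))" for \<beta>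
    unfolding dmulti_def by (rule bdd_above_schwartz_weighted[OF s])
  have T: "T \<beta> \<ge> 0" for \<beta>
    unfolding T_def by (rule cSUP_upper2[OF bdd[of \<beta>], of 0]) auto
  then show "schwartz_seminorm f \<ge> 0"
    unfolding schwartz_seminorm_def T_def[symmetric] by (intro sum_nonneg) auto
  assume "\<forall>j. \<alpha> j \<le> 2"
  have "\<bar>jbr x ^ (2 * CARD('d))\<bar> * cmod (dmulti \<alpha> f x) \<le> T \<alpha>"
    unfolding T_def by (rule cSUP_upper[OF _ bdd]) simp
  also have "T \<alpha> \<le> (\<Sum>\<beta>\<in>{\<alpha>::'d \<Rightarrow> nat. \<forall>j. \<alpha> j \<le> 2}. T \<beta>)"
    by (rule member_le_sum) (use \<open>\<forall>j. \<alpha> j \<le> 2\<close> finite_multi_indices_le_2 T in auto)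
  finally show "\<bar>jbr x ^ (2 * CARD('d))\<bar> * cmod (dmulti \<alpha> f x) \<le> schwartz_seminorm f"
    unfolding schwartz_seminorm_def T_def .
qed

lemma inverse_jbr_power_le_prod_cauchy_weight:
  fixes x :: "real^'d::finite"
  shows "1 / jbr x ^ (2 * CARD('d)) \<le> (\<Prod>i\<in>UNIV. cauchy_weight (x $ i))"
proof -
  have "(x $ i)^2 \<le> (norm x)^2" for i
    using component_le_norm_cart[of x i] by (metis abs_le_square_iff abs_norm_cancel)
  then have "(\<Prod>i\<in>UNIV. 1 + (x $ i)^2) \<le> (\<Prod>i\<in>(UNIV::'d set). 1 + norm x ^ 2)"
    by (intro prod_mono) (simp add: add_nonneg_nonneg)
  also have "\<dots> = jbr x ^ (2 * CARD('d))" by (simp add: jbr_power_even)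
  finally have le: "(\<Prod>i\<in>UNIV. 1 + (x $ i)^2) \<le> jbr x ^ (2 * CARD('d))" .
  have "0 < (\<Prod>i\<in>UNIV. 1 + (x $ i)^2)" by (intro prod_pos) (simp add: add_pos_nonneg)
  moreover have "0 < jbr x" unfolding jbr_def by (simp add: add_pos_nonneg)
  ultimately have "1 / jbr x ^ (2 * CARD('d)) \<le> 1 / (\<Prod>i\<in>UNIV. 1 + (x $ i)^2)"
    by (intro divide_left_mono le) simp_all
  then show ?thesis unfolding cauchy_weight_def by (simp add: prod_dividef)
qed

lemma schwartz_admissible:
  fixes f :: "real^'d::finite \<Rightarrow> complex"
  assumes s: "schwartz f" and ev: "\<And>j x. f (reflect j x) = f x"
  shows "admissible UNIV UNIV f (schwartz_seminorm f)"
proof (rule admissibleI)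
  show "(\<lambda>s. partials ls f (x + s *\<^sub>R axis i 1)) differentiable (at 0)" for ls x i
    using s unfolding schwartz_def by blast
  show "continuous_on UNIV (partials ls f)" for ls
    using s unfolding schwartz_def by blast
  show "f (reflect i x) = f x" for i x by (rule ev)
  fix ls :: "'d list" and x :: "real^'d" assume cnt: "\<forall>i. count_list ls i \<le> 2"
  define J where "J = jbr x ^ (2 * CARD('d))"
  have J: "J > 0" unfolding J_def jbr_def by (simp add: add_pos_nonneg)
  have pe: "partials ls f = dmulti (count_list ls) f"
    by (rule dmulti_eq_partials[OF schwartz_smooth[OF s], symmetric]) simp
  have "J * cmod (dmulti (count_list ls) f x) \<le> schwartz_seminorm f"
    using schwartz_seminorm_ge[OF s, of "count_list ls" x] cnt J unfolding J_def by simp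
  then have "cmod (dmulti (count_list ls) f x) \<le> schwartz_seminorm f * (1 / J)"
    using J by (simp add: field_simps)
  also have "\<dots> \<le> schwartz_seminorm f * (\<Prod>i\<in>UNIV. cauchy_weight (x $ i))"
    unfolding J_def
    by (intro mult_left_mono inverse_jbr_power_le_prod_cauchy_weight schwartz_seminorm_nonneg[OF s])
  finally show "cmod (partials ls f x) \<le> schwartz_seminorm f * (\<Prod>i\<in>UNIV. cauchy_weight (x $ i))"
    unfolding pe .
qed

section \<open>Summation over the dual lattice\<close>

text \<open>On an interval of length \<open>1/L \<le> 1\<close> the weight varies at most by a factor \<open>2\<close>.\<close>

lemma cauchy_weight_le_arctan_diff:
  fixes c L :: real
  assumes L: "L \<ge> 1"
  shows "cauchy_weight (c / L) \<le> 2 * L * (arctan ((c + 1/2) / L) - arctan ((c - 1/2) / L))"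
proof -
  have Lp: "L > 0" using L by simp
  have lt: "(c - 1/2) / L < (c + 1/2) / L" using Lp by (simp add: divide_strict_right_mono)
  obtain \<xi> where \<xi>: "(c - 1/2) / L < \<xi>" "\<xi> < (c + 1/2) / L"
    "arctan ((c + 1/2) / L) - arctan ((c - 1/2) / L) = ((c + 1/2) / L - (c - 1/2) / L) * (1 / (1 + \<xi>^2))"
    using MVT2[OF lt, of arctan "\<lambda>x. 1 / (1 + x^2)"] DERIV_arctan
    by (auto simp: inverse_eq_divide power2_eq_square)
  have d: "(c + 1/2) / L - (c - 1/2) / L = 1 / L" using Lp by (simp add: field_simps)
  have "c / L - 1 / (2 * L) < \<xi>" "\<xi> < c / L + 1 / (2 * L)" using \<xi>(1,2) Lp by (simp_all add: field_simps)
  moreover have "1 / (2 * L) \<le> 1/2" using L by (simp add: field_simps)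
  ultimately have "\<bar>\<xi>\<bar> \<le> \<bar>c / L\<bar> + 1/2" by linarith
  then have "\<xi>^2 \<le> (\<bar>c / L\<bar> + 1/2)^2" by (metis abs_ge_zero power2_abs power_mono)
  also have "\<dots> \<le> 2 * (c / L)^2 + 1/2"
    using sum_squares_ge_zero[of "\<bar>c / L\<bar> - 1/2" 0] by (simp add: power2_eq_square algebra_simps)
  finally have "1 + \<xi>^2 \<le> 2 * (1 + (c / L)^2)" by simp
  then have "cauchy_weight (c / L) \<le> 2 / (1 + \<xi>^2)"
    unfolding cauchy_weight_def by (simp add: field_simps add_pos_nonneg)
  also have "\<dots> = 2 * L * (arctan ((c + 1/2) / L) - arctan ((c - 1/2) / L))"
    unfolding \<xi>(3) d using Lp by simp
  finally show ?thesis .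
qed

lemma sum_cauchy_weight_int_le:
  fixes L :: real
  assumes L: "L \<ge> 1" and N: "finite (N :: int set)"
  shows "(\<Sum>n\<in>N. cauchy_weight (of_int n / L)) \<le> 2 * pi * L"
proof -
  define M where "M = nat (Max (insert 0 (abs ` N)))"
  define h where "h m = int m - int M" for m :: nat
  define F where "F m = arctan ((real m - real M - 1/2) / L)" for m :: nat
  have "N \<subseteq> h ` {..<2 * M + 1}"
  proof
    fix n assume "n \<in> N"
    then have "\<bar>n\<bar> \<le> int M" unfolding M_def using N by (simp add: Max_ge_iff)
    then have "nat (n + int M) < 2 * M + 1" "h (nat (n + int M)) = n" unfolding h_def by auto
    then show "n \<in> h ` {..<2 * M + 1}" by (metis image_eqI lessThan_iff)
  qed
  then have "(\<Sum>n\<in>N. cauchy_weight (of_int n / L)) \<le> (\<Sum>n\<in>h ` {..<2 * M + 1}. cauchy_weight (of_int n / L))"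
    by (rule sum_mono2[rotated]) (auto intro: less_imp_le cauchy_weight_pos)
  also have "\<dots> = (\<Sum>m<2 * M + 1. cauchy_weight (of_int (h m) / L))"
    by (rule sum.reindex_cong[of h]) (auto simp: inj_on_def h_def)
  also have "\<dots> \<le> (\<Sum>m<2 * M + 1. 2 * L * (F (Suc m) - F m))"
  proof (rule sum_mono)
    fix m
    show "cauchy_weight (of_int (h m) / L) \<le> 2 * L * (F (Suc m) - F m)"
      using cauchy_weight_le_arctan_diff[OF L, of "of_int (h m)"] unfolding F_def h_def
      by (simp add: algebra_simps)
  qed
  also have "\<dots> = 2 * L * (F (2 * M + 1) - F 0)"
    by (simp add: sum_distrib_left[symmetric] sum_lessThan_telescope)
  also have "\<dots> \<le> 2 * L * pi"
    using L arctan_ubound[of "(real (2 * M + 1) - real M - 1/2) / L"] arctan_lbound[of "(real 0 - real M - 1/2) / L"]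
    unfolding F_def by (intro mult_left_mono) auto
  finally show ?thesis by (simp add: mult_ac)
qed

lemma sum_cauchy_weight_lattice_le:
  fixes L :: real
  assumes L: "L \<ge> 1" and Z: "finite Z" "\<And>t. t \<in> Z \<Longrightarrow> \<exists>n::int. t = of_int n / L"
  shows "(\<Sum>t\<in>Z. cauchy_weight t) \<le> 2 * pi * L"
proof -
  define q where "q n = of_int n / L" for n :: int
  have inj: "inj q" unfolding q_def inj_def using L by auto
  have "Z = q ` (q -` Z)" unfolding q_def using Z(2) by auto
  then have "(\<Sum>t\<in>Z. cauchy_weight t) = (\<Sum>n\<in>q -` Z. cauchy_weight (of_int n / L))"
    by (metis (no_types, lifting) inj inj_on_subset subset_UNIV sum.reindex_cong q_def)
  also have "\<dots> \<le> 2 * pi * L"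
    by (rule sum_cauchy_weight_int_le[OF L finite_vimageI[OF Z(1) inj]])
  finally show ?thesis .
qed

lemma sum_prod_cauchy_weight_dual_lattice_le:
  fixes L :: real and K :: "(real^'d::finite) set"
  assumes L: "L \<ge> 1" and K: "finite K" "K \<subseteq> dual_lattice L"
  shows "(\<Sum>k\<in>K. \<Prod>i\<in>UNIV. cauchy_weight (k $ i)) \<le> (2 * pi * L) ^ CARD('d)"
proof -
  define Z where "Z i = (\<lambda>k. k $ i) ` K" for i
  have Z: "finite (Z i)" for i unfolding Z_def using K by simp
  have "(\<Sum>k\<in>K. \<Prod>i\<in>UNIV. cauchy_weight (k $ i)) = (\<Sum>g\<in>vec_nth ` K. \<Prod>i\<in>UNIV. cauchy_weight (g i))"
    by (simp add: sum.reindex inj_on_def vec_nth_inject)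
  also have "\<dots> \<le> (\<Sum>g\<in>PiE UNIV Z. \<Prod>i\<in>UNIV. cauchy_weight (g i))"
    by (rule sum_mono2) (auto simp: Z_def PiE_iff intro!: finite_PiE Z prod_nonneg intro: less_imp_le cauchy_weight_pos)
  also have "\<dots> = (\<Prod>i\<in>UNIV. \<Sum>t\<in>Z i. cauchy_weight t)"
    by (rule prod_sum_PiE[symmetric]) (auto simp: Z)
  also have "\<dots> \<le> (\<Prod>i\<in>(UNIV::'d set). 2 * pi * L)"
  proof (rule prod_mono, rule conjI)
    fix i
    show "0 \<le> (\<Sum>t\<in>Z i. cauchy_weight t)" by (intro sum_nonneg) (auto intro: less_imp_le cauchy_weight_pos)
    show "(\<Sum>t\<in>Z i. cauchy_weight t) \<le> 2 * pi * L"
      using K(2) by (intro sum_cauchy_weight_lattice_le[OF L Z]) (auto simp: Z_def dual_lattice_def)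
  qed
  finally show ?thesis by simp
qed

lemma fourier_box_weighted_decay:
  fixes f :: "real^'d::finite \<Rightarrow> complex"
  assumes L: "L \<ge> 1" and s: "schwartz f" and ev: "\<And>j x. f (reflect j x) = f x"
    and k: "k \<in> dual_lattice L"
  shows "(\<Prod>j\<in>UNIV. 1 + 4 * pi^2 * (k $ j)^2) * cmod (fourier_box L f k) \<le> (4 * pi) ^ CARD('d) * schwartz_seminorm f"
proof -
  have a: "L / 2 > 0" using L by simp
  have kL: "k $ i * (2 * (L / 2)) \<in> \<int>" for i
  proof -
    obtain n :: int where "k $ i = of_int n / L" using k unfolding dual_lattice_def by blast
    then have "k $ i * (2 * (L / 2)) = of_int n" using L by simp
    then show ?thesis by simp
  qed
  have "continuous_on UNIV f" using s unfolding schwartz_def by (metis partials.simps(1))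
  then have "fourier_box L f k = partial_fourier (L/2) k UNIV f 0" by (rule fourier_box_eq_partial_fourier)
  then show ?thesis
    using partial_fourier_decay[OF a kL subset_refl schwartz_admissible[OF s ev]]
    by (simp add: power_mult_distrib)
qed

lemma jbr_real_square: "jbr (t::real) ^ 2 = 1 + t^2"
  unfolding jbr_def by (simp add: add_nonneg_nonneg)

lemma prod_jbr_square_le: "(\<Prod>j\<in>UNIV. jbr (k $ j) ^ 2) \<le> (\<Prod>j\<in>UNIV. 1 + 4 * pi^2 * (k $ j)^2)"
proof (rule prod_mono, rule conjI)
  fix i
  have "(2::real)^2 \<le> pi^2" using pi_ge_two by (intro power_mono) auto
  then have "1 \<le> 4 * pi^2" by simp
  then have "(k $ i)^2 \<le> 4 * pi^2 * (k $ i)^2" by (simp add: mult_le_cancel_right1)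
  then show "jbr (k $ i) ^ 2 \<le> 1 + 4 * pi^2 * (k $ i)^2" unfolding jbr_real_square by simp
qed simp

lemma fourier_box_decay:
  fixes f :: "real^'d::finite \<Rightarrow> complex"
  assumes L: "L \<ge> 1" and s: "schwartz f" and ev: "\<And>j x. f (reflect j x) = f x"
    and k: "k \<in> dual_lattice L"
  shows "(\<Prod>j\<in>UNIV. jbr (k $ j) ^ 2) * cmod (fourier_box L f k) \<le> (4 * pi) ^ CARD('d) * schwartz_seminorm f"
    and "cmod (fourier_box L f k) \<le> (4 * pi) ^ CARD('d) * schwartz_seminorm f * (\<Prod>j\<in>UNIV. cauchy_weight (k $ j))"
proof -
  have "(\<Prod>j\<in>UNIV. 1 + 4 * pi^2 * (k $ j)^2) * cmod (fourier_box L f k) \<le> (4 * pi) ^ CARD('d) * schwartz_seminorm f"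
    by (rule fourier_box_weighted_decay[OF L s ev k])
  then show weighted: "(\<Prod>j\<in>UNIV. jbr (k $ j) ^ 2) * cmod (fourier_box L f k) \<le> (4 * pi) ^ CARD('d) * schwartz_seminorm f"
    by (rule order_trans[OF mult_right_mono[OF prod_jbr_square_le norm_ge_zero]])
  have "0 < (\<Prod>j\<in>UNIV. jbr (k $ j) ^ 2)" by (intro prod_pos) (simp add: jbr_real_square add_pos_nonneg)
  with weighted show "cmod (fourier_box L f k) \<le> (4 * pi) ^ CARD('d) * schwartz_seminorm f * (\<Prod>j\<in>UNIV. cauchy_weight (k $ j))"
    by (simp add: cauchy_weight_def jbr_real_square prod_dividef field_simps)
qed

lemma
  fixes f :: "real^'d::finite \<Rightarrow> complex"
  assumes L: "L \<ge> 1" and s: "schwartz f" and ev: "\<And>j x. f (reflect j x) = f x"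
  shows fourier_box_abs_summable: "(\<lambda>k. cmod (fourier_box L f k)) summable_on dual_lattice L"
    and infsum_fourier_box_le: "(\<Sum>\<^sub>\<infinity>k\<in>dual_lattice L. cmod (fourier_box L f k))
           \<le> (4 * pi) ^ CARD('d) * schwartz_seminorm f * (2 * pi * L) ^ CARD('d)"
proof -
  define C where "C = (4 * pi) ^ CARD('d) * schwartz_seminorm f"
  have "C \<ge> 0" unfolding C_def using schwartz_seminorm_nonneg[OF s] by simp
  have finite_sums: "(\<Sum>k\<in>K. cmod (fourier_box L f k)) \<le> C * (2 * pi * L) ^ CARD('d)"
    if "finite K" "K \<subseteq> dual_lattice L" for K
  proof -
    have "(\<Sum>k\<in>K. cmod (fourier_box L f k)) \<le> (\<Sum>k\<in>K. C * (\<Prod>j\<in>UNIV. cauchy_weight (k $ j)))"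
      using that fourier_box_decay(2)[OF L s ev] unfolding C_def by (intro sum_mono) auto
    also have "\<dots> \<le> C * (2 * pi * L) ^ CARD('d)"
      unfolding sum_distrib_left[symmetric]
      by (intro mult_left_mono sum_prod_cauchy_weight_dual_lattice_le[OF L that] \<open>C \<ge> 0\<close>)
    finally show ?thesis .
  qed
  then show summable: "(\<lambda>k. cmod (fourier_box L f k)) summable_on dual_lattice L"
    by (intro nonneg_bdd_above_summable_on bdd_aboveI2) auto
  show "(\<Sum>\<^sub>\<infinity>k\<in>dual_lattice L. cmod (fourier_box L f k)) \<le> (4 * pi) ^ CARD('d) * schwartz_seminorm f * (2 * pi * L) ^ CARD('d)"
    using infsum_le_finite_sums[OF summable finite_sums] unfolding C_def .
qed

theorem lemma6:
  "\<exists>C C'::real. \<forall>(L::real) (f::real^'d::finite \<Rightarrow> complex).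
     L \<ge> 1 \<and> schwartz f \<and> (\<forall>j x. f (reflect j x) = f x) \<longrightarrow>
       (\<forall>k \<in> dual_lattice L.
          (\<Prod>j\<in>UNIV. jbr (k $ j) ^ 2) * cmod (fourier_box L f k) \<le> C * schwartz_seminorm f) \<and>
       (\<lambda>k. cmod (fourier_box L f k)) summable_on dual_lattice L \<and>
       (1 / L ^ CARD('d)) * (\<Sum>\<^sub>\<infinity>k\<in>dual_lattice L. cmod (fourier_box L f k))
          \<le> C' * schwartz_seminorm f"
proof (rule exI[of _ "(4 * pi) ^ CARD('d)"], rule exI[of _ "(4 * pi) ^ CARD('d) * (2 * pi) ^ CARD('d)"],
    intro allI impI conjI)
  fix L :: real and f :: "real^'d \<Rightarrow> complex"
  assume "L \<ge> 1 \<and> schwartz f \<and> (\<forall>j x. f (reflect j x) = f x)"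
  then have L: "L \<ge> 1" and s: "schwartz f" and ev: "\<And>j x. f (reflect j x) = f x" by auto
  show "\<forall>k \<in> dual_lattice L. (\<Prod>j\<in>UNIV. jbr (k $ j) ^ 2) * cmod (fourier_box L f k)
      \<le> (4 * pi) ^ CARD('d) * schwartz_seminorm f"
    using fourier_box_decay(1)[OF L s ev] by blast
  show "(\<lambda>k. cmod (fourier_box L f k)) summable_on dual_lattice L"
    by (rule fourier_box_abs_summable[OF L s ev])
  have "L ^ CARD('d) > 0" using L by simp
  with infsum_fourier_box_le[OF L s ev]
  show "1 / L ^ CARD('d) * (\<Sum>\<^sub>\<infinity>k\<in>dual_lattice L. cmod (fourier_box L f k))
      \<le> (4 * pi) ^ CARD('d) * (2 * pi) ^ CARD('d) * schwartz_seminorm f"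
    by (simp add: power_mult_distrib field_simps)
qed

end
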